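(* Let $n_1,n_2,n_3,r$ be positive integers with $r\le\min(n_1,n_2)$, and let $$\mathscr{S}_r=\{\mathcal{X}\in\mathbb{R}^{n_1\times n_2\times n_3}:\ \mathrm{rank}_t(\mathcal{X})\le r,\ \|\mathcal{X}\|_F=1\}.$$ Then for every $0<\epsilon<1$ the covering number of $\mathscr{S}_r$ with respect to the Frobenius norm satisfies $$\mathscr{N}(\mathscr{S}_r,\|\cdot\|_F,\epsilon)\le (9/\epsilon)^{\,r\cdot r\cdot n_3+n_1\cdot r\cdot n_3+n_2\cdot r\cdot n_3}.$$
   Context: The tensor tubal rank $\mathrm{rank}_t(\mathcal{X})$ of $\mathcal{X}\in\mathbb{R}^{n_1\times n_2\times n_3}$ is the number of nonzero singular tubes $\mathcal{S}(i,i,:)$ in the central f-diagonal factor $\mathcal{S}$ of the t-SVD $\mathcal{X}=\mathcal{U}*\mathcal{S}*\mathcal{V}^*$ (t-product, t-SVD: $\mathcal{X}$ is factored via SVDs of its frontal slices after a DFT along the third mode; equivalently $\mathrm{rank}_t(\mathcal{X})$ is the maximum over $k$ of the rank of the $k$-th frontal slice of the DFT of $\mathcal{X}$ along the third dimension). For a subset $\mathscr{X}$ of a normed space, an $\epsilon$-net is a subset $N\subset\mathscr{X}$ such that every point of $\mathscr{X}$ is within distance $\epsilon$ of some point of $N$; the covering number $\mathscr{N}(\mathscr{X},\|\cdot\|,\epsilon)$ is the minimal cardinality of an $\epsilon$-net. *)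

theory Defs
  imports "HOL-Analysis.Analysis" "Jordan_Normal_Form.DL_Rank"
begin

text \<open>A real third-order tensor of size n1 x n2 x n3 is represented as a function
  nat => nat => nat => real (0-based indices) that vanishes outside the index box.\<close>

type_synonym tensor3 = "nat \<Rightarrow> nat \<Rightarrow> nat \<Rightarrow> real"

definition tensors :: "nat \<Rightarrow> nat \<Rightarrow> nat \<Rightarrow> tensor3 set" where
  "tensors n1 n2 n3 = {X. \<forall>i j k. (n1 \<le> i \<or> n2 \<le> j \<or> n3 \<le> k) \<longrightarrow> X i j k = 0}"

definition frob_norm :: "nat \<Rightarrow> nat \<Rightarrow> nat \<Rightarrow> tensor3 \<Rightarrow> real" where
  "frob_norm n1 n2 n3 X = sqrt (\<Sum>i<n1. \<Sum>j<n2. \<Sum>k<n3. (X i j k)\<^sup>2)"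

definition frob_dist :: "nat \<Rightarrow> nat \<Rightarrow> nat \<Rightarrow> tensor3 \<Rightarrow> tensor3 \<Rightarrow> real" where
  "frob_dist n1 n2 n3 X Y = frob_norm n1 n2 n3 (\<lambda>i j k. X i j k - Y i j k)"

definition dft_slice :: "nat \<Rightarrow> nat \<Rightarrow> nat \<Rightarrow> tensor3 \<Rightarrow> nat \<Rightarrow> complex mat" where
  "dft_slice n1 n2 n3 X k = mat n1 n2 (\<lambda>(i, j).
     \<Sum>l<n3. complex_of_real (X i j l) *
       cis (- 2 * pi * real k * real l / real n3))"

definition tubal_rank :: "nat \<Rightarrow> nat \<Rightarrow> nat \<Rightarrow> tensor3 \<Rightarrow> nat" where
  "tubal_rank n1 n2 n3 X = Max ((\<lambda>k. vec_space.rank n1 (dft_slice n1 n2 n3 X k)) ` {..<n3})"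

definition eps_net :: "('a \<Rightarrow> 'a \<Rightarrow> real) \<Rightarrow> 'a set \<Rightarrow> real \<Rightarrow> 'a set \<Rightarrow> bool" where
  "eps_net d S \<epsilon> N \<longleftrightarrow> N \<subseteq> S \<and> (\<forall>x\<in>S. \<exists>y\<in>N. d x y \<le> \<epsilon>)"

definition covering_number :: "('a \<Rightarrow> 'a \<Rightarrow> real) \<Rightarrow> 'a set \<Rightarrow> real \<Rightarrow> ereal" where
  "covering_number d S \<epsilon> = (INF N \<in> {N. finite N \<and> eps_net d S \<epsilon> N}. ereal (real (card N)))"

definition low_tubal_sphere :: "nat \<Rightarrow> nat \<Rightarrow> nat \<Rightarrow> nat \<Rightarrow> tensor3 set" where
  "low_tubal_sphere n1 n2 n3 r =
     {X \<in> tensors n1 n2 n3. tubal_rank n1 n2 n3 X \<le> r \<and> frob_norm n1 n2 n3 X = 1}"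

end

theory Submission
  imports Defs
begin

text \<open>If \<open>rank_t X \<le> r\<close>, Gram--Schmidt applied to the Fourier slices of \<open>X\<close> factors \<open>X = U * W\<close>
  (t-product) with \<open>U\<close> of size \<open>n1 \<times> r \<times> n3\<close>, whose t-product is a contraction for the
  Frobenius norm, and \<open>W\<close> of size \<open>r \<times> n2 \<times> n3\<close> with \<open>\<parallel>W\<parallel>\<^sub>F = \<parallel>X\<parallel>\<^sub>F = 1\<close>. Both factors lie in unit
  balls of norms on finitely many real coordinates, which have \<open>\<delta>\<close>-nets of size \<open>(1 + 2/\<delta>) ^ dim\<close>
  by a volume argument. For \<open>\<delta> = \<epsilon>/4\<close> the t-products of net points approximate the sphere within
  \<open>\<epsilon>/2\<close>, and replacing each approximant by a nearby point of the sphere gives an \<open>\<epsilon>\<close>-net of size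
  \<open>(9/\<epsilon>) ^ (n1 r n3 + n2 r n3)\<close>.\<close>

section \<open>The discrete Fourier transform\<close>

definition dft :: "nat \<Rightarrow> (nat \<Rightarrow> complex) \<Rightarrow> nat \<Rightarrow> complex" where
  "dft n x k = (\<Sum>l<n. x l * cis (- 2 * pi * real k * real l / real n))"

definition idft :: "nat \<Rightarrow> (nat \<Rightarrow> complex) \<Rightarrow> nat \<Rightarrow> complex" where
  "idft n G l = (\<Sum>k<n. G k * cis (2 * pi * real k * real l / real n)) / of_nat n"

text \<open>\<open>(m + (n - l)) mod n\<close> is \<open>m - l\<close> modulo \<open>n\<close>, written so that no truncated subtraction occurs.\<close>

definition circ_conv :: "nat \<Rightarrow> (nat \<Rightarrow> complex) \<Rightarrow> (nat \<Rightarrow> complex) \<Rightarrow> nat \<Rightarrow> complex" where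
  "circ_conv n a b m = (\<Sum>l<n. a l * b ((m + (n - l)) mod n))"

lemma cis_eq_1_iff_int: "cis b = 1 \<longleftrightarrow> (\<exists>m::int. b = 2 * pi * of_int m)"
  unfolding cis_conv_exp exp_eq_1 by (auto simp: algebra_simps)

lemma cis_eqI: "x = y + 2 * pi * of_int m \<Longrightarrow> cis x = cis y"
  by (metis Ints_of_int cis_mult cis_multiple_2pi mult_1_right)

lemma sum_roots_of_unity:
  assumes n: "0 < n"
  shows "(\<Sum>k<n. cis (2 * pi * real k * of_int d / real n)) = (if int n dvd d then of_nat n else 0)"
proof -
  define z where "z = cis (2 * pi * of_int d / real n)"
  have zk: "cis (2 * pi * real k * of_int d / real n) = z ^ k" for k
    unfolding z_def Complex.DeMoivre by (simp add: field_simps)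
  have "z ^ n = cis (2 * pi * of_int d)"
    unfolding z_def Complex.DeMoivre using n by (simp add: field_simps)
  then have zn: "z ^ n = 1"
    by (simp add: cis_multiple_2pi)
  show ?thesis
  proof (cases "int n dvd d")
    case True
    then obtain m where "d = int n * m" by (auto simp: dvd_def)
    then have "z = 1" unfolding z_def using n by (simp add: cis_eq_1_iff_int)
    then show ?thesis using True by (simp add: zk)
  next
    case False
    have "z \<noteq> 1"
    proof
      assume "z = 1"
      then obtain m where "2 * pi * of_int d / real n = 2 * pi * of_int m"
        unfolding z_def cis_eq_1_iff_int by blast
      then have "of_int d = real n * of_int m" using n by (simp add: field_simps)
      then have "d = int n * m" by (metis of_int_eq_iff of_int_mult of_int_of_nat_eq)
      then show False using False by simp
    qed
    then have "(\<Sum>k<n. z ^ k) = 0" using zn by (simp add: sum_gp_strict)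
    then show ?thesis using False by (simp add: zk)
  qed
qed

lemma sum_cis_orthogonality:
  assumes n: "0 < n" and "l < n" "l' < n"
  shows "(\<Sum>k<n. cis (2 * pi * real k * (real l - real l') / real n)) = (if l = l' then of_nat n else 0)"
proof -
  have "(\<Sum>k<n. cis (2 * pi * real k * (real l - real l') / real n))
      = (\<Sum>k<n. cis (2 * pi * real k * of_int (int l - int l') / real n))" by simp
  also have "\<dots> = (if int n dvd (int l - int l') then of_nat n else 0)"
    by (rule sum_roots_of_unity[OF n])
  also have "(int n dvd (int l - int l')) = (l = l')"
  proof
    assume "int n dvd (int l - int l')"
    then obtain m where m: "int l - int l' = int n * m" by (auto simp: dvd_def)
    have "\<bar>int n * m\<bar> < int n" using assms m by linarith
    then have "m = 0" using n by (auto simp: abs_mult)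
    then show "l = l'" using m by simp
  qed simp
  finally show ?thesis .
qed

lemma cis_mult_cnj_cis:
  "cis (- 2 * pi * real k * real l / real n) * cnj (cis (- 2 * pi * real k * real l' / real n))
   = cis (2 * pi * real k * (real l' - real l) / real n)"
  unfolding cis_cnj cis_mult by (rule arg_cong[where f=cis]) (simp add: diff_divide_distrib right_diff_distrib)

lemma cis_mult_cis_diff:
  "cis (2 * pi * real k' * real l / real n) * cis (- 2 * pi * real k * real l / real n)
   = cis (2 * pi * real l * (real k' - real k) / real n)"
  unfolding cis_mult by (rule arg_cong[where f=cis]) (simp add: diff_divide_distrib right_diff_distrib mult_ac)

lemma sum_rotate3: "(\<Sum>k\<in>A. \<Sum>l\<in>B. \<Sum>m\<in>C. f k l m) = (\<Sum>l\<in>B. \<Sum>m\<in>C. \<Sum>k\<in>A. f k l m)"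
  by (subst sum.swap) (rule sum.cong[OF refl], rule sum.swap)

lemma dft_parseval:
  assumes n: "0 < n"
  shows "(\<Sum>k<n. (cmod (dft n x k))\<^sup>2) = real n * (\<Sum>l<n. (cmod (x l))\<^sup>2)"
proof -
  let ?e = "\<lambda>k l l'. cis (2 * pi * real k * (real l' - real l) / real n)"
  have "complex_of_real (\<Sum>k<n. (cmod (dft n x k))\<^sup>2) = (\<Sum>k<n. dft n x k * cnj (dft n x k))"
    unfolding of_real_sum by (intro sum.cong refl) (rule complex_norm_square)
  also have "\<dots> = (\<Sum>k<n. \<Sum>l<n. \<Sum>l'<n. x l * cnj (x l') * ?e k l l')"
    unfolding dft_def cnj_sum sum_product
    by (intro sum.cong refl) (subst cis_mult_cnj_cis[symmetric], simp only: complex_cnj_mult mult_ac)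
  also have "\<dots> = (\<Sum>l<n. \<Sum>l'<n. x l * cnj (x l') * (\<Sum>k<n. ?e k l l'))"
    unfolding sum_distrib_left by (rule sum_rotate3)
  also have "\<dots> = (\<Sum>l<n. \<Sum>l'<n. x l * cnj (x l') * (if l' = l then of_nat n else 0))"
    by (intro sum.cong refl) (simp add: sum_cis_orthogonality[OF n])
  also have "\<dots> = (\<Sum>l<n. of_nat n * (x l * cnj (x l)))"
    by (intro sum.cong refl) (simp add: if_distrib sum.delta cong: if_cong)
  also have "\<dots> = (\<Sum>l<n. of_nat n * complex_of_real ((cmod (x l))\<^sup>2))"
    by (simp only: complex_norm_square)
  also have "\<dots> = complex_of_real (real n * (\<Sum>l<n. (cmod (x l))\<^sup>2))"
    by (simp only: of_real_mult of_real_sum sum_distrib_left of_real_of_nat_eq)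
  finally show ?thesis by (simp only: of_real_eq_iff)
qed

lemma dft_idft:
  assumes n: "0 < n" and k: "k < n"
  shows "dft n (idft n G) k = G k"
proof -
  let ?e = "\<lambda>l k'. cis (2 * pi * real l * (real k' - real k) / real n)"
  have "dft n (idft n G) k = (\<Sum>l<n. \<Sum>k'<n. G k' * ?e l k') / of_nat n"
    unfolding dft_def idft_def sum_divide_distrib sum_distrib_right
    by (intro sum.cong refl) (subst cis_mult_cis_diff[symmetric], simp)
  also have "\<dots> = (\<Sum>k'<n. G k' * (\<Sum>l<n. ?e l k')) / of_nat n"
    unfolding sum_distrib_left by (subst sum.swap) (rule refl)
  also have "\<dots> = (\<Sum>k'<n. G k' * (if k' = k then of_nat n else 0)) / of_nat n"
    using k by (intro arg_cong2[where f="(/)"] sum.cong refl) (simp add: sum_cis_orthogonality[OF n])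
  also have "\<dots> = G k" using n k by (simp add: if_distrib sum.delta cong: if_cong)
  finally show ?thesis .
qed

lemma dft_cong: "(\<And>l. l < n \<Longrightarrow> x l = y l) \<Longrightarrow> dft n x k = dft n y k"
  unfolding dft_def by (intro sum.cong refl) auto

lemma dft_sum: "dft n (\<lambda>l. \<Sum>a\<in>A. f a l) k = (\<Sum>a\<in>A. dft n (f a) k)"
  unfolding dft_def sum_distrib_right by (rule sum.swap)

lemma dft_diff: "dft n (\<lambda>l. f l - g l) k = dft n f k - dft n g k"
  unfolding dft_def by (simp add: left_diff_distrib sum_subtractf)

lemma bij_betw_neg_mod:
  assumes "0 < (n::nat)"
  shows "bij_betw (\<lambda>k. (n - k) mod n) {..<n} {..<n}"
proof -
  have "(n - (n - a) mod n) mod n = a" if "a < n" for a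
    using that by (cases "a = 0") (simp_all add: mod_if)
  then show ?thesis
    by (intro bij_betw_byWitness[where f'="\<lambda>k. (n - k) mod n"]) (use assms in auto)
qed

lemma cis_neg_mod:
  assumes n: "0 < n" and k: "k < n"
  shows "cis (- 2 * pi * real ((n - k) mod n) * real l / real n) = cnj (cis (- 2 * pi * real k * real l / real n))"
proof (cases "k = 0")
  case False
  then have "(n - k) mod n = n - k" using k by auto
  then show ?thesis unfolding cis_cnj
    by (intro cis_eqI[where m="- int l"]) (use k n in \<open>simp add: of_nat_diff field_simps\<close>)
qed simp

lemma dft_of_real_neg_mod:
  assumes "0 < n" and "k < n"
  shows "dft n (\<lambda>l. complex_of_real (x l)) ((n - k) mod n) = cnj (dft n (\<lambda>l. complex_of_real (x l)) k)"
  unfolding dft_def cnj_sum using cis_neg_mod[OF assms] by simp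

lemma idft_real:
  assumes n: "0 < n" and sym: "\<And>k. k < n \<Longrightarrow> G ((n - k) mod n) = cnj (G k)"
  shows "idft n G l \<in> \<real>"
proof -
  let ?e = "\<lambda>k. cis (2 * pi * real k * real l / real n)"
  have "cnj (?e k) = ?e ((n - k) mod n)" if "k < n" for k
  proof -
    have "cnj (?e k) = cis (- 2 * pi * real k * real l / real n)" by (simp add: cis_cnj)
    also have "\<dots> = cnj (cis (- 2 * pi * real ((n - k) mod n) * real l / real n))"
      using cis_neg_mod[OF n that, of l] by simp
    finally show ?thesis by (simp add: cis_cnj)
  qed
  then have "cnj (idft n G l) = (\<Sum>k<n. G ((n - k) mod n) * ?e ((n - k) mod n)) / of_nat n"
    unfolding idft_def by (simp add: sym)
  also have "\<dots> = idft n G l"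
    unfolding idft_def using sum.reindex_bij_betw[OF bij_betw_neg_mod[OF n], of "\<lambda>k. G k * ?e k"] by simp
  finally show ?thesis by (simp add: Reals_cnj_iff)
qed

lemma dft_Re_idft:
  assumes "0 < n" and "\<And>k. k < n \<Longrightarrow> G ((n - k) mod n) = cnj (G k)" and "k < n"
  shows "dft n (\<lambda>l. complex_of_real (Re (idft n G l))) k = G k"
  using dft_idft[OF assms(1,3)] idft_real[of n G, OF assms(1,2)] by (simp add: Reals_cnj_iff[symmetric])

lemma cis_dft_mod:
  assumes n: "0 < n"
  shows "cis (- 2 * pi * real k * real t / real n) = cis (- 2 * pi * real k * real (t mod n) / real n)"
proof -
  have "real t = real (t mod n) + real n * real (t div n)"
    by (metis of_nat_add of_nat_mult mod_div_mult_eq add.commute mult.commute)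
  then show ?thesis
    by (intro cis_eqI[where m="- int (k * (t div n))"]) (use n in \<open>simp add: field_simps\<close>)
qed

lemma cis_dft_add:
  "cis (- 2 * pi * real k * real a / real n) * cis (- 2 * pi * real k * real b / real n)
   = cis (- 2 * pi * real k * real (a + b) / real n)"
  unfolding cis_mult of_nat_add by (rule arg_cong[where f=cis]) (simp add: diff_divide_distrib ring_distribs)

lemma bij_betw_shift_mod:
  assumes "0 < (n::nat)" and "l < n"
  shows "bij_betw (\<lambda>m. (m + (n - l)) mod n) {..<n} {..<n}"
proof (rule bij_betw_byWitness[where f'="\<lambda>m. (m + l) mod n"])
  show "\<forall>a\<in>{..<n}. ((a + l) mod n + (n - l)) mod n = a"
  proof
    fix a assume "a \<in> {..<n}"
    have "((a + l) mod n + (n - l)) mod n = (a + l + (n - l)) mod n" by (rule mod_add_left_eq)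
    also have "a + l + (n - l) = a + n" using assms by simp
    finally show "((a + l) mod n + (n - l)) mod n = a" using \<open>a \<in> {..<n}\<close> by simp
  qed
qed (use assms in \<open>auto simp: mod_add_left_eq\<close>)

lemma dft_circ_conv:
  assumes n: "0 < n"
  shows "dft n (circ_conv n a b) k = dft n a k * dft n b k"
proof -
  let ?c = "\<lambda>t. cis (- 2 * pi * real k * real t / real n)"
  let ?s = "\<lambda>l m. (m + (n - l)) mod n"
  have split: "?c m = ?c l * ?c (?s l m)" if "m < n" "l < n" for m l
  proof -
    have "?c (?s l m) = ?c (m + (n - l))" using cis_dft_mod[OF n, of k "m + (n - l)"] by simp
    then have "?c l * ?c (?s l m) = ?c (l + (m + (n - l)))" by (simp only: cis_dft_add)
    also have "l + (m + (n - l)) = m + n" using that by simp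
    also have "?c (m + n) = ?c m" using cis_dft_mod[OF n, of k "m + n"] cis_dft_mod[OF n, of k m] that by simp
    finally show ?thesis by simp
  qed
  have "dft n (circ_conv n a b) k = (\<Sum>l<n. \<Sum>m<n. a l * ?c l * (b (?s l m) * ?c (?s l m)))"
    unfolding dft_def circ_conv_def sum_distrib_right
  proof (subst sum.swap, intro sum.cong refl)
    fix l m assume "l \<in> {..<n}" "m \<in> {..<n}"
    then show "a l * b (?s l m) * ?c m = a l * ?c l * (b (?s l m) * ?c (?s l m))"
      using split[of m l] by simp
  qed
  also have "\<dots> = (\<Sum>l<n. a l * ?c l * (\<Sum>m<n. b m * ?c m))"
    unfolding sum_distrib_left[symmetric]
    using sum.reindex_bij_betw[OF bij_betw_shift_mod[OF n], of _ "\<lambda>m. b m * ?c m"] by simp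
  also have "\<dots> = dft n a k * dft n b k" unfolding dft_def by (simp add: sum_distrib_right)
  finally show ?thesis .
qed

section \<open>Gram--Schmidt orthonormalisation of complex vectors\<close>

text \<open>Vectors of \<open>\<complex>\<^sup>d\<close> are functions on \<open>nat\<close>, read on \<open>{..<d}\<close>.\<close>

type_synonym cvec = "nat \<Rightarrow> complex"

definition cinner :: "nat \<Rightarrow> cvec \<Rightarrow> cvec \<Rightarrow> complex" where
  "cinner d x y = (\<Sum>i<d. x i * cnj (y i))"

definition cnorm :: "nat \<Rightarrow> cvec \<Rightarrow> real" where
  "cnorm d w = sqrt (\<Sum>i<d. (cmod (w i))\<^sup>2)"

definition cnormalize :: "nat \<Rightarrow> cvec \<Rightarrow> cvec" where
  "cnormalize d w = (\<lambda>i. if i < d then w i / complex_of_real (cnorm d w) else 0)"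

definition is_zero_cvec :: "nat \<Rightarrow> cvec \<Rightarrow> bool" where
  "is_zero_cvec d w = (\<forall>i<d. w i = 0)"

text \<open>The Gram--Schmidt process works on lists of pairs \<open>(c, o)\<close>: \<open>o\<close> is an orthonormal vector
  and \<open>c\<close> the input vector that produced it.\<close>

definition gs_residual :: "nat \<Rightarrow> (cvec \<times> cvec) list \<Rightarrow> cvec \<Rightarrow> cvec" where
  "gs_residual d P c = (\<lambda>i. c i - (\<Sum>q<length P. cinner d c (snd (P!q)) * snd (P!q) i))"

fun gram_schmidt :: "nat \<Rightarrow> cvec list \<Rightarrow> (cvec \<times> cvec) list \<Rightarrow> (cvec \<times> cvec) list" where
  "gram_schmidt d [] P = P"
| "gram_schmidt d (c # cs) P =
     (if is_zero_cvec d (gs_residual d P c) then gram_schmidt d cs P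
      else gram_schmidt d cs (P @ [(c, cnormalize d (gs_residual d P c))]))"

definition orthonormal :: "nat \<Rightarrow> (cvec \<times> cvec) list \<Rightarrow> bool" where
  "orthonormal d P =
     (\<forall>p<length P. \<forall>q<length P. cinner d (snd (P!p)) (snd (P!q)) = (if p = q then 1 else 0))"

definition expands_in :: "nat \<Rightarrow> (cvec \<times> cvec) list \<Rightarrow> cvec \<Rightarrow> bool" where
  "expands_in d P c = (\<forall>i<d. c i = (\<Sum>q<length P. cinner d c (snd (P!q)) * snd (P!q) i))"

text \<open>Triangularity of the inputs against the orthonormal vectors is what makes the selected
  inputs linearly independent.\<close>

definition gs_triangular :: "nat \<Rightarrow> (cvec \<times> cvec) list \<Rightarrow> bool" where
  "gs_triangular d P =
     ((\<forall>p<length P. \<forall>q<length P. p < q \<longrightarrow> cinner d (fst (P!p)) (snd (P!q)) = 0)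
      \<and> (\<forall>p<length P. cinner d (fst (P!p)) (snd (P!p)) \<noteq> 0))"

definition gs_invariant :: "nat \<Rightarrow> (cvec \<times> cvec) list \<Rightarrow> bool" where
  "gs_invariant d P =
     (orthonormal d P \<and> gs_triangular d P \<and> (\<forall>p<length P. expands_in d P (fst (P!p))))"

lemma cinner_commute_cnj: "cinner d y x = cnj (cinner d x y)"
  unfolding cinner_def by (simp add: mult.commute)

lemma cinner_self: "cinner d x x = complex_of_real ((cnorm d x)\<^sup>2)"
proof -
  have "(cnorm d x)\<^sup>2 = (\<Sum>i<d. (cmod (x i))\<^sup>2)" unfolding cnorm_def by (simp add: sum_nonneg)
  then have "complex_of_real ((cnorm d x)\<^sup>2) = (\<Sum>i<d. complex_of_real ((cmod (x i))\<^sup>2))" by simp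
  also have "\<dots> = cinner d x x" unfolding cinner_def by (simp only: complex_norm_square)
  finally show ?thesis by simp
qed

lemma cinner_sum_left:
  "cinner d (\<lambda>i. \<Sum>q\<in>Q. a q * v q i) y = (\<Sum>q\<in>Q. a q * cinner d (v q) y)"
  unfolding cinner_def sum_distrib_right sum_distrib_left by (subst sum.swap) (simp only: mult_ac)

lemma orthonormal_sum_delta:
  assumes "orthonormal d P" "q < length P"
  shows "(\<Sum>p<length P. f p * cinner d (snd (P!p)) (snd (P!q))) = f q"
proof -
  have "(\<Sum>p<length P. f p * cinner d (snd (P!p)) (snd (P!q))) = (\<Sum>p<length P. f p * (if p = q then 1 else 0))"
    using assms unfolding orthonormal_def by (intro sum.cong refl) simp
  also have "\<dots> = f q" using assms(2) by (simp add: if_distrib sum.delta cong: if_cong)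
  finally show ?thesis .
qed

lemma cinner_expands_in:
  assumes "expands_in d P c"
  shows "cinner d c y = (\<Sum>q<length P. cinner d c (snd (P!q)) * cinner d (snd (P!q)) y)"
proof -
  have "cinner d c y = cinner d (\<lambda>i. \<Sum>q<length P. cinner d c (snd (P!q)) * snd (P!q) i) y"
    using assms unfolding expands_in_def cinner_def[of d c y] cinner_def[of d "\<lambda>i. \<Sum>q<length P. _ q * _ q i" y]
    by (intro sum.cong refl) (simp only: lessThan_iff)
  then show ?thesis by (simp only: cinner_sum_left)
qed

lemma expands_in_orthogonal:
  assumes "expands_in d P c" "\<And>q. q < length P \<Longrightarrow> cinner d (snd (P!q)) y = 0"
  shows "cinner d c y = 0"
  using cinner_expands_in[OF assms(1), of y] assms(2) by simp

lemma expands_in_snoc: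
  assumes "expands_in d P c" "cinner d c (snd x) = 0"
  shows "expands_in d (P @ [x]) c"
  using assms unfolding expands_in_def by (simp add: nth_append)

lemma cinner_diff_left: "cinner d (\<lambda>i. x i - z i) y = cinner d x y - cinner d z y"
  unfolding cinner_def by (simp add: left_diff_distrib sum_subtractf)

lemma cinner_residual:
  "cinner d (gs_residual d P c) y = cinner d c y - (\<Sum>p<length P. cinner d c (snd (P!p)) * cinner d (snd (P!p)) y)"
  unfolding gs_residual_def cinner_diff_left cinner_sum_left ..

lemma cinner_residual_basis:
  assumes "orthonormal d P" "q < length P"
  shows "cinner d (gs_residual d P c) (snd (P!q)) = 0"
  unfolding cinner_residual orthonormal_sum_delta[OF assms] by simp

lemma expands_in_if_residual_zero:
  assumes "is_zero_cvec d (gs_residual d P c)" shows "expands_in d P c"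
  using assms unfolding expands_in_def is_zero_cvec_def gs_residual_def by (auto simp: algebra_simps)

lemma cnorm_pos: "\<not> is_zero_cvec d w \<Longrightarrow> 0 < cnorm d w"
  unfolding is_zero_cvec_def cnorm_def by (auto intro!: sum_pos2[where i=i for i] simp: sum_nonneg)

lemma cinner_normalize_left: "cinner d (cnormalize d w) y = cinner d w y / complex_of_real (cnorm d w)"
  unfolding cinner_def cnormalize_def by (simp add: sum_divide_distrib)

lemma cinner_normalize_self:
  assumes "\<not> is_zero_cvec d w" shows "cinner d (cnormalize d w) (cnormalize d w) = 1"
proof -
  have "cinner d (cnormalize d w) (cnormalize d w)
      = cinner d w w / (complex_of_real (cnorm d w) * complex_of_real (cnorm d w))"
    unfolding cinner_def cnormalize_def by (simp add: sum_divide_distrib)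
  then show ?thesis using cnorm_pos[OF assms] by (simp add: cinner_self power2_eq_square)
qed

lemma cinner_normalize_right:
  assumes "\<not> is_zero_cvec d w" shows "cinner d w (cnormalize d w) = complex_of_real (cnorm d w)"
proof -
  have "cinner d w (cnormalize d w) = cnj (complex_of_real ((cnorm d w)\<^sup>2) / complex_of_real (cnorm d w))"
    by (subst cinner_commute_cnj) (simp add: cinner_normalize_left cinner_self)
  also have "\<dots> = complex_of_real (cnorm d w)" using cnorm_pos[OF assms] by (simp add: power2_eq_square)
  finally show ?thesis .
qed

lemma orthonormal_snoc:
  assumes "orthonormal d P" "\<And>q. q < length P \<Longrightarrow> cinner d u (snd (P!q)) = 0" "cinner d u u = 1"
  shows "orthonormal d (P @ [(c, u)])"
  unfolding orthonormal_def
proof (intro allI impI)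
  fix p q assume "p < length (P @ [(c, u)])" "q < length (P @ [(c, u)])"
  then have p: "p \<le> length P" and q: "q \<le> length P" by auto
  have "cinner d (snd (P!p)) u = 0" if "p < length P"
    using assms(2)[OF that] cinner_commute_cnj[of d "snd (P!p)" u] by simp
  then show "cinner d (snd ((P @ [(c, u)])!p)) (snd ((P @ [(c, u)])!q)) = (if p = q then 1 else 0)"
    using assms p q unfolding orthonormal_def
    by (cases "p = length P"; cases "q = length P") (simp_all add: nth_append)
qed

lemma gs_triangular_snoc:
  assumes "gs_triangular d P" "\<And>p. p < length P \<Longrightarrow> cinner d (fst (P!p)) u = 0" "cinner d c u \<noteq> 0"
  shows "gs_triangular d (P @ [(c, u)])"
  unfolding gs_triangular_def
proof (intro conjI allI impI)
  fix p q assume "p < length (P @ [(c, u)])" "q < length (P @ [(c, u)])" "p < q"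
  then show "cinner d (fst ((P @ [(c, u)])!p)) (snd ((P @ [(c, u)])!q)) = 0"
    using assms unfolding gs_triangular_def by (cases "q = length P") (simp_all add: nth_append)
next
  fix p assume "p < length (P @ [(c, u)])"
  then show "cinner d (fst ((P @ [(c, u)])!p)) (snd ((P @ [(c, u)])!p)) \<noteq> 0"
    using assms unfolding gs_triangular_def by (cases "p = length P") (simp_all add: nth_append)
qed

lemma gs_invariant_snoc:
  assumes inv: "gs_invariant d P" and nz: "\<not> is_zero_cvec d (gs_residual d P c)"
  defines "u \<equiv> cnormalize d (gs_residual d P c)"
  shows "gs_invariant d (P @ [(c, u)])" and "expands_in d (P @ [(c, u)]) c"
    and "\<And>c'. expands_in d P c' \<Longrightarrow> expands_in d (P @ [(c, u)]) c'"
proof -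
  let ?w = "gs_residual d P c"
  have on: "orthonormal d P" and tri: "gs_triangular d P"
    and exp: "\<And>p. p < length P \<Longrightarrow> expands_in d P (fst (P!p))"
    using inv unfolding gs_invariant_def by auto
  have u_perp: "cinner d u (snd (P!q)) = 0" if "q < length P" for q
    unfolding u_def cinner_normalize_left using cinner_residual_basis[OF on that] by simp
  have basis_u: "cinner d (snd (P!q)) u = 0" if "q < length P" for q
    using u_perp[OF that] cinner_commute_cnj[of d "snd (P!q)" u] by simp
  have perp_u: "cinner d c' u = 0" if "expands_in d P c'" for c'
    using that basis_u by (rule expands_in_orthogonal)
  have "cinner d ?w u = cinner d c u"
    unfolding cinner_residual using basis_u by simp
  then have cu: "cinner d c u = complex_of_real (cnorm d ?w)"
    using cinner_normalize_right[OF nz] unfolding u_def by simp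
  show exp_c: "expands_in d (P @ [(c, u)]) c"
    unfolding expands_in_def
  proof (intro allI impI)
    fix i assume "i < d"
    then have "cinner d c u * u i = ?w i"
      using cnorm_pos[OF nz] unfolding cu by (simp add: u_def cnormalize_def)
    then show "c i = (\<Sum>q<length (P @ [(c, u)]). cinner d c (snd ((P @ [(c, u)])!q)) * snd ((P @ [(c, u)])!q) i)"
      by (simp add: nth_append gs_residual_def)
  qed
  show exp_old: "expands_in d (P @ [(c, u)]) c'" if "expands_in d P c'" for c'
    using expands_in_snoc[OF that] perp_u[OF that] by simp
  have "orthonormal d (P @ [(c, u)])"
    using on u_perp cinner_normalize_self[OF nz] unfolding u_def by (rule orthonormal_snoc)
  moreover have "gs_triangular d (P @ [(c, u)])"
    using tri perp_u[OF exp] cu cnorm_pos[OF nz] by (intro gs_triangular_snoc) auto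
  moreover have "expands_in d (P @ [(c, u)]) (fst ((P @ [(c, u)])!p))" if "p < length (P @ [(c, u)])" for p
    using that exp_c exp_old[OF exp] by (cases "p = length P") (auto simp: nth_append)
  ultimately show "gs_invariant d (P @ [(c, u)])" unfolding gs_invariant_def by blast
qed

lemma gs_invariant_Nil: "gs_invariant d []"
  unfolding gs_invariant_def orthonormal_def gs_triangular_def by simp

lemma gram_schmidt_invariant:
  assumes "gs_invariant d P" "\<forall>c\<in>C. expands_in d P c"
  shows "gs_invariant d (gram_schmidt d cs P) \<and> (\<forall>c\<in>C \<union> set cs. expands_in d (gram_schmidt d cs P) c)
    \<and> set (map fst (gram_schmidt d cs P)) \<subseteq> set (map fst P) \<union> set cs"
  using assms
proof (induction cs arbitrary: P C)
  case (Cons c cs)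
  show ?case
  proof (cases "is_zero_cvec d (gs_residual d P c)")
    case True
    then have "\<forall>c'\<in>insert c C. expands_in d P c'"
      using Cons.prems expands_in_if_residual_zero by auto
    from Cons.IH[OF Cons.prems(1) this] True show ?thesis by auto
  next
    case False
    let ?P' = "P @ [(c, cnormalize d (gs_residual d P c))]"
    have "gs_invariant d ?P'" "\<forall>c'\<in>insert c C. expands_in d ?P' c'"
      using gs_invariant_snoc[OF Cons.prems(1) False] Cons.prems(2) by auto
    from Cons.IH[OF this] False show ?thesis by auto
  qed
qed simp

definition cconj_vec :: "cvec \<Rightarrow> cvec" where "cconj_vec v = (\<lambda>i. cnj (v i))"

lemma cinner_cconj_vec: "cinner d (cconj_vec x) (cconj_vec y) = cnj (cinner d x y)"
  unfolding cinner_def cconj_vec_def by simp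

lemma gram_schmidt_cconj_vec:
  "gram_schmidt d (map cconj_vec cs) (map (map_prod cconj_vec cconj_vec) P)
   = map (map_prod cconj_vec cconj_vec) (gram_schmidt d cs P)"
proof (induction cs arbitrary: P)
  case (Cons c cs)
  have res: "gs_residual d (map (map_prod cconj_vec cconj_vec) P) (cconj_vec c) = cconj_vec (gs_residual d P c)"
    unfolding gs_residual_def cconj_vec_def by (auto simp: cinner_cconj_vec[unfolded cconj_vec_def] intro!: ext)
  have "cnorm d (cconj_vec w) = cnorm d w" for w
    unfolding cnorm_def cconj_vec_def by simp
  then have "cnormalize d (cconj_vec w) = cconj_vec (cnormalize d w)" for w
    unfolding cnormalize_def by (auto simp: cconj_vec_def intro!: ext)
  moreover have "is_zero_cvec d (cconj_vec w) = is_zero_cvec d w" for w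
    unfolding is_zero_cvec_def cconj_vec_def by simp
  ultimately show ?case
    using Cons.IH[of "P @ [(c, cnormalize d (gs_residual d P c))]"] Cons.IH[of P] by (simp add: res)
qed simp

lemma gs_triangular_comb_zero:
  assumes tri: "gs_triangular d P" and Q: "Q \<subseteq> {..<length P}"
    and comb: "\<forall>i<d. (\<Sum>q\<in>Q. b q * fst (P!q) i) = 0" and "q \<in> Q"
  shows "b q = 0"
proof (rule ccontr)
  assume "b q \<noteq> 0"
  define T where "T = {q \<in> Q. b q \<noteq> 0}"
  have "T \<subseteq> {..<length P}" using Q unfolding T_def by auto
  then have "finite T" by (rule finite_subset) simp
  define m where "m = Max T"
  have "q \<in> T" using \<open>q \<in> Q\<close> \<open>b q \<noteq> 0\<close> unfolding T_def by simp
  then have "m \<in> T" unfolding m_def using \<open>finite T\<close> by (intro Max_in) auto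
  then have m: "m \<in> Q" "m < length P" "b m \<noteq> 0" using Q unfolding T_def by auto
  have above_m: "b q' = 0" if "q' \<in> Q" "m < q'" for q'
    using that Max_ge[OF \<open>finite T\<close>] unfolding m_def T_def by force
  have "0 = cinner d (\<lambda>i. \<Sum>q\<in>Q. b q * fst (P!q) i) (snd (P!m))"
    using comb unfolding cinner_def by simp
  also have "\<dots> = (\<Sum>q\<in>Q. b q * cinner d (fst (P!q)) (snd (P!m)))"
    by (rule cinner_sum_left)
  also have "\<dots> = (\<Sum>q\<in>{m}. b q * cinner d (fst (P!q)) (snd (P!m)))"
  proof (rule sum.mono_neutral_right)
    show "finite Q" using Q finite_subset by blast
    show "\<forall>q'\<in>Q - {m}. b q' * cinner d (fst (P!q')) (snd (P!m)) = 0"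
    proof
      fix q' assume q': "q' \<in> Q - {m}"
      show "b q' * cinner d (fst (P!q')) (snd (P!m)) = 0"
      proof (cases "q' < m")
        case True
        then show ?thesis using tri m(2) q' Q unfolding gs_triangular_def by auto
      next
        case False
        then show ?thesis using above_m q' by simp
      qed
    qed
  qed (use m(1) in simp)
  finally show False using m tri unfolding gs_triangular_def by simp
qed

lemma gs_invariant_inj:
  assumes "gs_invariant d P"
  shows "inj_on (\<lambda>p. vec d (fst (P!p))) {..<length P}"
proof (rule inj_onI, rule ccontr)
  fix p q assume p: "p \<in> {..<length P}" and q: "q \<in> {..<length P}"
    and eq: "vec d (fst (P!p)) = vec d (fst (P!q))" and "p \<noteq> q"
  have tri: "gs_triangular d P" using assms unfolding gs_invariant_def by auto
  have same: "cinner d (fst (P!p)) y = cinner d (fst (P!q)) y" for y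
  proof -
    have "\<forall>i<d. fst (P!p) i = fst (P!q) i" using eq by (metis index_vec)
    then show ?thesis unfolding cinner_def by (intro sum.cong refl) simp
  qed
  show False
  proof (cases "p < q")
    case True
    then show False using tri p q same[of "snd (P!q)"] unfolding gs_triangular_def by auto
  next
    case False
    then have "q < p" using \<open>p \<noteq> q\<close> by simp
    then show False using tri p q same[of "snd (P!p)"] unfolding gs_triangular_def by auto
  qed
qed

lemma gs_invariant_lin_indpt:
  assumes inv: "gs_invariant d P"
  shows "\<not> module.lin_dep class_ring (module_vec TYPE(complex) d) ((\<lambda>p. vec d (fst (P!p))) ` {..<length P})"
proof
  let ?V = "\<lambda>p. vec d (fst (P!p))"
  assume "module.lin_dep class_ring (module_vec TYPE(complex) d) (?V ` {..<length P})"
  then obtain A a v where A: "finite A" "A \<subseteq> ?V ` {..<length P}"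
    "module.lincomb (module_vec TYPE(complex) d) a A = \<zero>\<^bsub>module_vec TYPE(complex) d\<^esub>"
    "v \<in> A" "a v \<noteq> \<zero>\<^bsub>class_ring\<^esub>"
    unfolding module.lin_dep_def[OF vec_module] by blast
  have Acar: "A \<subseteq> carrier_vec d" using A(2) by auto
  define Q where "Q = {q \<in> {..<length P}. ?V q \<in> A}"
  have AQ: "A = ?V ` Q" using A(2) unfolding Q_def by auto
  have inj: "inj_on ?V Q" using gs_invariant_inj[OF inv] unfolding Q_def by (rule inj_on_subset) auto
  have comb: "\<forall>i<d. (\<Sum>q\<in>Q. a (?V q) * fst (P!q) i) = 0"
  proof (intro allI impI)
    fix i assume i: "i < d"
    have "(\<Sum>q\<in>Q. a (?V q) * fst (P!q) i) = (\<Sum>x\<in>A. a x * x $ i)"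
      unfolding AQ sum.reindex[OF inj] using i by simp
    also have "\<dots> = module.lincomb (module_vec TYPE(complex) d) a A $ i"
      using vec_space.lincomb_index[OF i Acar] by simp
    also have "\<dots> = 0" unfolding A(3) using i by (simp add: module_vec_def)
    finally show "(\<Sum>q\<in>Q. a (?V q) * fst (P!q) i) = 0" .
  qed
  obtain q where q: "q \<in> Q" "v = ?V q" using A(4) AQ by auto
  have tri: "gs_triangular d P" using inv unfolding gs_invariant_def by simp
  have "Q \<subseteq> {..<length P}" unfolding Q_def by auto
  from gs_triangular_comb_zero[OF tri this comb q(1)] have "a v = 0" using q(2) by simp
  then show False using A(5) by (simp add: class_ring_simps)
qed

lemma expands_in_parseval:
  assumes "expands_in d P c"
  shows "(\<Sum>q<length P. (cmod (cinner d c (snd (P!q))))\<^sup>2) = (\<Sum>i<d. (cmod (c i))\<^sup>2)"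
proof -
  have "complex_of_real (\<Sum>i<d. (cmod (c i))\<^sup>2) = cinner d c c"
    unfolding cinner_def of_real_sum by (intro sum.cong refl) (rule complex_norm_square)
  also have "\<dots> = (\<Sum>q<length P. cinner d c (snd (P!q)) * cnj (cinner d c (snd (P!q))))"
    by (subst cinner_expands_in[OF assms]) (simp add: cinner_commute_cnj[of d "snd (P!_)" c])
  also have "\<dots> = complex_of_real (\<Sum>q<length P. (cmod (cinner d c (snd (P!q))))\<^sup>2)"
    unfolding of_real_sum by (intro sum.cong refl) (rule complex_norm_square[symmetric])
  finally show ?thesis by (simp only: of_real_eq_iff)
qed

lemma orthonormal_comb_norm:
  assumes "orthonormal d P"
  shows "(\<Sum>i<d. (cmod (\<Sum>q<length P. z q * snd (P!q) i))\<^sup>2) = (\<Sum>q<length P. (cmod (z q))\<^sup>2)"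
proof -
  let ?v = "\<lambda>i. \<Sum>q<length P. z q * snd (P!q) i"
  have "cinner d (snd (P!q)) ?v = cnj (z q)" if "q < length P" for q
    using orthonormal_sum_delta[OF assms that, of z] cinner_commute_cnj[of d "snd (P!q)" ?v]
    by (simp add: cinner_sum_left)
  then have "cinner d ?v ?v = (\<Sum>q<length P. z q * cnj (z q))"
    by (simp add: cinner_sum_left)
  moreover have "complex_of_real (\<Sum>i<d. (cmod (?v i))\<^sup>2) = cinner d ?v ?v"
    unfolding cinner_def of_real_sum by (intro sum.cong refl) (rule complex_norm_square)
  moreover have "(\<Sum>q<length P. z q * cnj (z q)) = complex_of_real (\<Sum>q<length P. (cmod (z q))\<^sup>2)"
    unfolding of_real_sum by (intro sum.cong refl) (rule complex_norm_square[symmetric])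
  ultimately show ?thesis by (simp only: of_real_eq_iff)
qed

section \<open>Nets in the unit ball of a norm on finitely many coordinates\<close>

lemma emeasure_lborel_affine_preimage:
  fixes s \<rho> :: real and B :: "real set"
  assumes rho: "0 < \<rho>" and B: "B \<in> sets borel"
  shows "emeasure lborel {x. (x - s) / \<rho> \<in> B} = ennreal \<rho> * emeasure lborel B"
proof -
  have "(\<lambda>x::real. (x - s) / \<rho>) \<in> borel_measurable borel" by measurable
  from measurable_sets[OF this B] have S: "{x. (x - s) / \<rho> \<in> B} \<in> sets borel"
    by (simp add: vimage_def)
  have "emeasure lborel {x. (x - s) / \<rho> \<in> B}
      = emeasure (density (distr lborel borel (\<lambda>x. s + \<rho> * x)) (\<lambda>_. ennreal \<bar>\<rho>\<bar>)) {x. (x - s) / \<rho> \<in> B}"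
    using lborel_real_affine[of \<rho> s] rho by simp
  also have "\<dots> = ennreal \<rho> * emeasure (distr lborel borel (\<lambda>x. s + \<rho> * x)) {x. (x - s) / \<rho> \<in> B}"
    using S rho by (subst emeasure_density_const) auto
  also have "emeasure (distr lborel borel (\<lambda>x. s + \<rho> * x)) {x. (x - s) / \<rho> \<in> B}
      = emeasure lborel ((\<lambda>x. s + \<rho> * x) -` {x. (x - s) / \<rho> \<in> B} \<inter> space lborel)"
    using S by (subst emeasure_distr) auto
  also have "(\<lambda>x. s + \<rho> * x) -` {x. (x - s) / \<rho> \<in> B} \<inter> space lborel = B"
    using rho by auto
  finally show ?thesis .
qed

interpretation lborel_product: product_sigma_finite "\<lambda>_::'i. lborel :: real measure"
  by (simp add: product_sigma_finite_def lborel.sigma_finite_measure_axioms)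

lemma PiM_lborel_density_affine:
  fixes I :: "'i set" and t :: "'i \<Rightarrow> real"
  assumes finI: "finite I" and rho: "0 < \<rho>"
  defines "M \<equiv> PiM I (\<lambda>_. lborel :: real measure)"
  shows "density (distr M M (\<lambda>\<omega>. \<lambda>i\<in>I. (\<omega> i - t i) / \<rho>)) (\<lambda>_. ennreal (1 / \<rho> ^ card I)) = M"
  unfolding M_def
proof (rule lborel_product.PiM_eqI[OF finI])
  let ?M = "PiM I (\<lambda>_. lborel :: real measure)"
  let ?f = "\<lambda>\<omega>. \<lambda>i\<in>I. (\<omega> i - t i) / \<rho>"
  let ?D = "distr ?M ?M ?f"
  fix B :: "'i \<Rightarrow> real set" assume B: "\<And>i. i \<in> I \<Longrightarrow> B i \<in> sets lborel"
  have fm: "?f \<in> measurable ?M ?M" by (intro measurable_restrict) measurable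
  have box: "Pi\<^sub>E I B \<in> sets ?M" using B by (intro sets_PiM_I_finite finI) auto
  have pre: "?f -` Pi\<^sub>E I B \<inter> space ?M = Pi\<^sub>E I (\<lambda>i. {x. (x - t i) / \<rho> \<in> B i})"
    by (auto simp: space_PiM PiE_iff extensional_def)
  have "emeasure (density ?D (\<lambda>_. ennreal (1 / \<rho> ^ card I))) (Pi\<^sub>E I B)
      = ennreal (1 / \<rho> ^ card I) * emeasure ?M (Pi\<^sub>E I (\<lambda>i. {x. (x - t i) / \<rho> \<in> B i}))"
    using box fm by (simp add: emeasure_density_const emeasure_distr pre)
  also have "emeasure ?M (Pi\<^sub>E I (\<lambda>i. {x. (x - t i) / \<rho> \<in> B i})) = (\<Prod>i\<in>I. ennreal \<rho> * emeasure lborel (B i))"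
  proof -
    have "{x. (x - t i) / \<rho> \<in> B i} \<in> sets lborel" if "i \<in> I" for i
      using measurable_sets[OF _ B[OF that], of "\<lambda>x. (x - t i) / \<rho>" borel] by (simp add: vimage_def)
    then show ?thesis
      using B by (simp add: lborel_product.emeasure_PiM[OF finI] emeasure_lborel_affine_preimage[OF rho])
  qed
  also have "\<dots> = ennreal (\<rho> ^ card I) * (\<Prod>i\<in>I. emeasure lborel (B i))"
    using rho by (simp add: prod.distrib ennreal_power)
  also have "ennreal (1 / \<rho> ^ card I) * (ennreal (\<rho> ^ card I) * (\<Prod>i\<in>I. emeasure lborel (B i)))
      = (\<Prod>i\<in>I. emeasure lborel (B i))"
    using rho by (simp add: ennreal_mult[symmetric] mult.assoc[symmetric] del: ennreal_mult'')
  finally show "emeasure (density ?D (\<lambda>_. ennreal (1 / \<rho> ^ card I))) (Pi\<^sub>E I B)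
      = (\<Prod>i\<in>I. emeasure lborel (B i))" .
qed simp

lemma emeasure_PiM_affine_preimage:
  fixes I :: "'i set" and t :: "'i \<Rightarrow> real"
  assumes finI: "finite I" and rho: "0 < \<rho>" and A: "A \<in> sets (PiM I (\<lambda>_. lborel))"
  defines "M \<equiv> PiM I (\<lambda>_. lborel :: real measure)"
  shows "emeasure M ((\<lambda>\<omega>. \<lambda>i\<in>I. (\<omega> i - t i) / \<rho>) -` A \<inter> space M) = ennreal (\<rho> ^ card I) * emeasure M A"
proof -
  let ?f = "\<lambda>\<omega>. \<lambda>i\<in>I. (\<omega> i - t i) / \<rho>"
  have fm: "?f \<in> measurable M M" unfolding M_def by (intro measurable_restrict) measurable
  have "emeasure M A = ennreal (1 / \<rho> ^ card I) * emeasure (distr M M ?f) A"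
    using A unfolding M_def
    by (subst PiM_lborel_density_affine[OF finI rho, of t, symmetric]) (subst emeasure_density_const, auto)
  also have "emeasure (distr M M ?f) A = emeasure M (?f -` A \<inter> space M)"
    using A fm unfolding M_def by (subst emeasure_distr) auto
  finally have "ennreal (\<rho> ^ card I) * emeasure M A
      = ennreal (\<rho> ^ card I) * ennreal (1 / \<rho> ^ card I) * emeasure M (?f -` A \<inter> space M)"
    by (simp add: mult.assoc)
  also have "ennreal (\<rho> ^ card I) * ennreal (1 / \<rho> ^ card I) = 1"
    using rho by (simp add: ennreal_mult[symmetric] del: ennreal_mult'')
  finally show ?thesis by (simp add: restrict_def)
qed

definition coord_unit_ball :: "(('i \<Rightarrow> real) \<Rightarrow> real) \<Rightarrow> 'i set \<Rightarrow> ('i \<Rightarrow> real) set" where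
  "coord_unit_ball p I = {x. (\<forall>j. j \<notin> I \<longrightarrow> x j = 0) \<and> p x \<le> 1}"

locale coord_norm =
  fixes p :: "('i::countable \<Rightarrow> real) \<Rightarrow> real" and I :: "'i set" and C :: real
  assumes finite_I: "finite I"
    and triangle: "\<And>x y. p (\<lambda>i. x i + y i) \<le> p x + p y"
    and homogeneous: "\<And>c x. p (\<lambda>i. c * x i) = \<bar>c\<bar> * p x"
    and coord_bound: "\<And>x i. i \<in> I \<Longrightarrow> \<bar>x i\<bar> \<le> C * p x"
    and closed_sublevel: "closed {x. p x \<le> 1}"
begin

lemma p_zero: "p (\<lambda>i. 0) = 0"
  using homogeneous[of 0 "\<lambda>i. 0"] by simp

lemma p_uminus: "p (\<lambda>i. - x i) = p x"
  using homogeneous[of "-1" x] by simp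

lemma p_nonneg: "0 \<le> p x"
  using triangle[of x "\<lambda>i. - x i"] by (simp add: p_zero p_uminus)

lemma p_diff_commute: "p (\<lambda>i. x i - y i) = p (\<lambda>i. y i - x i)"
  using p_uminus[of "\<lambda>i. y i - x i"] by simp

lemma p_diff_triangle: "p (\<lambda>i. x i - z i) \<le> p (\<lambda>i. x i - y i) + p (\<lambda>i. y i - z i)"
  using triangle[of "\<lambda>i. x i - y i" "\<lambda>i. y i - z i"] by simp

definition unit_coord :: "'i \<Rightarrow> 'i \<Rightarrow> real" where "unit_coord i = (\<lambda>j. if j = i then 1 else 0)"

lemma p_le_sum_unit_coord:
  assumes "\<And>j. j \<notin> I \<Longrightarrow> x j = 0"
  shows "p x \<le> (\<Sum>i\<in>I. \<bar>x i\<bar> * p (unit_coord i))"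
proof -
  have restrict: "p (\<lambda>j. if j \<in> F then x j else 0) \<le> (\<Sum>i\<in>F. \<bar>x i\<bar> * p (unit_coord i))"
    if "finite F" for F
    using that
  proof (induction F rule: finite_induct)
    case (insert i F)
    have "(\<lambda>j. if j \<in> insert i F then x j else 0) = (\<lambda>j. (if j \<in> F then x j else 0) + x i * unit_coord i j)"
      using insert(2) by (auto simp: unit_coord_def)
    then show ?case
      using insert triangle[of "\<lambda>j. if j \<in> F then x j else 0" "\<lambda>j. x i * unit_coord i j"]
        homogeneous[of "x i" "unit_coord i"] by (simp add: add.commute)
  qed (simp add: p_zero)
  have "(\<lambda>j. if j \<in> I then x j else 0) = x" using assms by auto
  then show ?thesis using restrict[OF finite_I] by simp
qed

abbreviation "coord_measure \<equiv> PiM I (\<lambda>_. lborel :: real measure)"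

text \<open>Points of \<open>PiM\<close> are undefined off \<open>I\<close>, so balls evaluate \<open>p\<close> on the zero extension.\<close>

definition zero_ext :: "('i \<Rightarrow> real) \<Rightarrow> 'i \<Rightarrow> real" where
  "zero_ext \<omega> = (\<lambda>i. if i \<in> I then \<omega> i else 0)"

definition pball :: "('i \<Rightarrow> real) \<Rightarrow> real \<Rightarrow> ('i \<Rightarrow> real) set" where
  "pball c \<rho> = {\<omega> \<in> space coord_measure. p (\<lambda>i. zero_ext \<omega> i - c i) \<le> \<rho>}"

lemma pball_unit_sets: "pball (\<lambda>_. 0) 1 \<in> sets coord_measure"
proof -
  have "zero_ext \<in> borel_measurable coord_measure"
    unfolding zero_ext_def
  proof (rule measurable_coordinatewise_then_product)
    fix i show "(\<lambda>x. if i \<in> I then x i else 0) \<in> borel_measurable coord_measure"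
      by (cases "i \<in> I") (simp_all add: measurable_component_singleton)
  qed
  from measurable_sets[OF this borel_closed[OF closed_sublevel]]
  have "zero_ext -` {x. p x \<le> 1} \<inter> space coord_measure \<in> sets coord_measure" .
  moreover have "zero_ext -` {x. p x \<le> 1} \<inter> space coord_measure = pball (\<lambda>_. 0) 1"
    unfolding pball_def by auto
  ultimately show ?thesis by simp
qed

lemma pball_eq_preimage:
  assumes rho: "0 < \<rho>" and c: "\<And>j. j \<notin> I \<Longrightarrow> c j = 0"
  shows "pball c \<rho> = (\<lambda>\<omega>. \<lambda>i\<in>I. (\<omega> i - c i) / \<rho>) -` pball (\<lambda>_. 0) 1 \<inter> space coord_measure"
proof -
  have "zero_ext (\<lambda>i\<in>I. (\<omega> i - c i) / \<rho>) = (\<lambda>i. (1 / \<rho>) * (zero_ext \<omega> i - c i))" for \<omega>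
    unfolding zero_ext_def using c by (auto simp: field_simps)
  moreover have "p (\<lambda>i. (1 / \<rho>) * (zero_ext \<omega> i - c i)) \<le> 1 \<longleftrightarrow> p (\<lambda>i. zero_ext \<omega> i - c i) \<le> \<rho>" for \<omega>
    using homogeneous[of "1 / \<rho>" "\<lambda>i. zero_ext \<omega> i - c i"] rho by (simp add: divide_le_eq mult.commute)
  moreover have "(\<lambda>i\<in>I. (\<omega> i - c i) / \<rho>) \<in> space coord_measure" for \<omega> by (simp add: space_PiM)
  ultimately show ?thesis unfolding pball_def by auto
qed

lemma pball_sets:
  assumes "0 < \<rho>" and "\<And>j. j \<notin> I \<Longrightarrow> c j = 0"
  shows "pball c \<rho> \<in> sets coord_measure"
proof -
  have "(\<lambda>\<omega>. \<lambda>i\<in>I. (\<omega> i - c i) / \<rho>) \<in> measurable coord_measure coord_measure"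
    by (intro measurable_restrict) measurable
  from measurable_sets[OF this pball_unit_sets] show ?thesis using pball_eq_preimage[OF assms] by simp
qed

lemma emeasure_pball:
  assumes "0 < \<rho>" and "\<And>j. j \<notin> I \<Longrightarrow> c j = 0"
  shows "emeasure coord_measure (pball c \<rho>) = ennreal (\<rho> ^ card I) * emeasure coord_measure (pball (\<lambda>_. 0) 1)"
  using emeasure_PiM_affine_preimage[OF finite_I assms(1) pball_unit_sets, of c] pball_eq_preimage[OF assms]
  by simp

lemma emeasure_cube:
  assumes "0 \<le> a"
  shows "emeasure coord_measure (Pi\<^sub>E I (\<lambda>_. {-a..a})) = ennreal ((2 * a) ^ card I)"
  using assms by (simp add: lborel_product.emeasure_PiM[OF finite_I] prod_constant ennreal_power)

lemma emeasure_pball_unit_pos: "0 < emeasure coord_measure (pball (\<lambda>_. 0) 1)"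
proof -
  define a where "a = 1 / (1 + (\<Sum>i\<in>I. p (unit_coord i)))"
  have S: "0 \<le> (\<Sum>i\<in>I. p (unit_coord i))" by (simp add: sum_nonneg p_nonneg)
  then have "0 < a" unfolding a_def by simp
  have "Pi\<^sub>E I (\<lambda>_. {-a..a}) \<subseteq> pball (\<lambda>_. 0) 1"
  proof
    fix \<omega> assume \<omega>: "\<omega> \<in> Pi\<^sub>E I (\<lambda>_. {-a..a})"
    have "p (zero_ext \<omega>) \<le> (\<Sum>i\<in>I. \<bar>zero_ext \<omega> i\<bar> * p (unit_coord i))"
      by (rule p_le_sum_unit_coord) (simp add: zero_ext_def)
    also have "\<dots> \<le> (\<Sum>i\<in>I. a * p (unit_coord i))"
      using \<omega> by (intro sum_mono mult_right_mono p_nonneg) (auto simp: zero_ext_def PiE_iff abs_le_iff)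
    also have "\<dots> = a * (\<Sum>i\<in>I. p (unit_coord i))" by (simp add: sum_distrib_left)
    also have "\<dots> \<le> 1" using S unfolding a_def by simp
    finally show "\<omega> \<in> pball (\<lambda>_. 0) 1" using \<omega> unfolding pball_def by (auto simp: space_PiM PiE_iff)
  qed
  then have "emeasure coord_measure (Pi\<^sub>E I (\<lambda>_. {-a..a})) \<le> emeasure coord_measure (pball (\<lambda>_. 0) 1)"
    by (intro emeasure_mono pball_unit_sets)
  moreover have "0 < emeasure coord_measure (Pi\<^sub>E I (\<lambda>_. {-a..a}))"
    using \<open>0 < a\<close> by (simp add: emeasure_cube)
  ultimately show ?thesis by simp
qed

lemma emeasure_pball_unit_finite: "emeasure coord_measure (pball (\<lambda>_. 0) 1) < \<infinity>"
proof -
  have "pball (\<lambda>_. 0) 1 \<subseteq> Pi\<^sub>E I (\<lambda>_. {-\<bar>C\<bar>..\<bar>C\<bar>})"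
  proof
    fix \<omega> assume "\<omega> \<in> pball (\<lambda>_. 0) 1"
    then have sp: "\<omega> \<in> space coord_measure" and le1: "p (zero_ext \<omega>) \<le> 1" unfolding pball_def by auto
    have "\<bar>\<omega> i\<bar> \<le> \<bar>C\<bar>" if "i \<in> I" for i
    proof -
      have "\<bar>\<omega> i\<bar> \<le> C * p (zero_ext \<omega>)" using coord_bound[OF that, of "zero_ext \<omega>"] that by (simp add: zero_ext_def)
      also have "\<dots> \<le> \<bar>C\<bar> * 1" using le1 p_nonneg[of "zero_ext \<omega>"] by (intro mult_mono) auto
      finally show ?thesis by simp
    qed
    then show "\<omega> \<in> Pi\<^sub>E I (\<lambda>_. {-\<bar>C\<bar>..\<bar>C\<bar>})" using sp by (auto simp: space_PiM PiE_iff abs_le_iff minus_le_iff)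
  qed
  then have "emeasure coord_measure (pball (\<lambda>_. 0) 1) \<le> emeasure coord_measure (Pi\<^sub>E I (\<lambda>_. {-\<bar>C\<bar>..\<bar>C\<bar>}))"
    by (rule emeasure_mono) (rule sets_PiM_I_finite[OF finite_I], simp)
  also have "\<dots> < \<infinity>" by (simp add: emeasure_cube)
  finally show ?thesis .
qed

definition separated :: "real \<Rightarrow> ('i \<Rightarrow> real) set \<Rightarrow> bool" where
  "separated \<delta> T \<longleftrightarrow> (\<forall>x\<in>T. \<forall>y\<in>T. x \<noteq> y \<longrightarrow> \<delta> < p (\<lambda>i. x i - y i))"

lemma pball_disjoint:
  assumes "separated \<delta> T"
  shows "disjoint_family_on (\<lambda>t. pball t (\<delta> / 2)) T"
  unfolding disjoint_family_on_def
proof (intro ballI impI equals0I)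
  fix t t' \<omega> assume "t \<in> T" "t' \<in> T" "t \<noteq> t'" and "\<omega> \<in> pball t (\<delta> / 2) \<inter> pball t' (\<delta> / 2)"
  then have "p (\<lambda>i. t i - zero_ext \<omega> i) \<le> \<delta> / 2" "p (\<lambda>i. zero_ext \<omega> i - t' i) \<le> \<delta> / 2"
    unfolding pball_def by (auto simp: p_diff_commute[of t])
  then have "p (\<lambda>i. t i - t' i) \<le> \<delta>" using p_diff_triangle[of t t' "zero_ext \<omega>"] by simp
  moreover have "\<delta> < p (\<lambda>i. t i - t' i)"
    using assms \<open>t \<in> T\<close> \<open>t' \<in> T\<close> \<open>t \<noteq> t'\<close> unfolding separated_def by blast
  ultimately show False by simp
qed

lemma pball_subset_pball_zero:
  assumes "p t \<le> 1"
  shows "pball t \<rho> \<subseteq> pball (\<lambda>_. 0) (1 + \<rho>)"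
proof
  fix \<omega> assume \<omega>: "\<omega> \<in> pball t \<rho>"
  have "p (\<lambda>i. zero_ext \<omega> i - 0) \<le> p (\<lambda>i. zero_ext \<omega> i - t i) + p (\<lambda>i. t i - 0)" by (rule p_diff_triangle)
  then show "\<omega> \<in> pball (\<lambda>_. 0) (1 + \<rho>)" using \<omega> assms unfolding pball_def by auto
qed

text \<open>The volume argument: disjoint balls of radius \<open>\<delta>/2\<close> around the points of \<open>T\<close> fit into
  the ball of radius \<open>1 + \<delta>/2\<close>, and volumes scale like \<open>\<rho> ^ card I\<close>.\<close>

lemma card_separated_le:
  assumes "0 < \<delta>" and "finite T" and T: "T \<subseteq> coord_unit_ball p I" and "separated \<delta> T"
  shows "real (card T) \<le> (1 + 2 / \<delta>) ^ card I"
proof -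
  obtain V where V: "emeasure coord_measure (pball (\<lambda>_. 0) 1) = ennreal V" "0 < V"
    using emeasure_pball_unit_pos emeasure_pball_unit_finite
    by (cases "emeasure coord_measure (pball (\<lambda>_. 0) 1)") auto
  have supp: "\<And>j. j \<notin> I \<Longrightarrow> t j = 0" and "p t \<le> 1" if "t \<in> T" for t
    using T that unfolding coord_unit_ball_def by auto
  let ?B = "\<lambda>t. pball t (\<delta> / 2)"
  have B_sets: "?B t \<in> sets coord_measure" if "t \<in> T" for t
    using \<open>0 < \<delta>\<close> supp[OF that] by (intro pball_sets) auto
  have "(\<Sum>t\<in>T. emeasure coord_measure (?B t)) = emeasure coord_measure (\<Union>t\<in>T. ?B t)"
    using B_sets \<open>finite T\<close> pball_disjoint[OF \<open>separated \<delta> T\<close>] by (intro sum_emeasure) auto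
  also have "\<dots> \<le> emeasure coord_measure (pball (\<lambda>_. 0) (1 + \<delta> / 2))"
  proof (rule emeasure_mono)
    show "(\<Union>t\<in>T. ?B t) \<subseteq> pball (\<lambda>_. 0) (1 + \<delta> / 2)"
      using pball_subset_pball_zero \<open>\<And>t. t \<in> T \<Longrightarrow> p t \<le> 1\<close> by blast
  qed (use \<open>0 < \<delta>\<close> in \<open>intro pball_sets, auto\<close>)
  also have "\<dots> = ennreal ((1 + \<delta> / 2) ^ card I * V)"
    using \<open>0 < \<delta>\<close> V by (subst emeasure_pball) (auto simp: ennreal_mult)
  also have "(\<Sum>t\<in>T. emeasure coord_measure (?B t)) = (\<Sum>t\<in>T. ennreal ((\<delta> / 2) ^ card I * V))"
    using \<open>0 < \<delta>\<close> V supp by (intro sum.cong refl) (subst emeasure_pball, auto simp: ennreal_mult)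
  also have "\<dots> = ennreal (real (card T) * ((\<delta> / 2) ^ card I * V))"
    using \<open>0 < \<delta>\<close> V by (simp add: ennreal_of_nat_eq_real_of_nat ennreal_mult)
  finally have "real (card T) * (\<delta> / 2) ^ card I * V \<le> (1 + \<delta> / 2) ^ card I * V"
    using \<open>0 < \<delta>\<close> V by (simp add: ennreal_le_iff mult.assoc)
  then have "real (card T) * (\<delta> / 2) ^ card I \<le> (1 + \<delta> / 2) ^ card I"
    using \<open>0 < V\<close> by (simp add: mult_le_cancel_right_pos)
  then have "real (card T) \<le> (1 + \<delta> / 2) ^ card I / (\<delta> / 2) ^ card I"
    using \<open>0 < \<delta>\<close> by (simp add: le_divide_eq)
  also have "\<dots> = ((1 + \<delta> / 2) / (\<delta> / 2)) ^ card I"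
    by (rule power_divide[symmetric])
  also have "(1 + \<delta> / 2) / (\<delta> / 2) = 1 + 2 / \<delta>"
    using \<open>0 < \<delta>\<close> by (simp add: field_simps)
  finally show ?thesis .
qed

text \<open>A maximal \<open>\<delta>\<close>-separated subset of \<open>S\<close> is a \<open>\<delta>\<close>-net of \<open>S\<close>.\<close>

lemma exists_net:
  assumes "0 < \<delta>" and S: "S \<subseteq> coord_unit_ball p I"
  shows "\<exists>N. finite N \<and> N \<subseteq> S \<and> real (card N) \<le> (1 + 2 / \<delta>) ^ card I
           \<and> (\<forall>x\<in>S. \<exists>y\<in>N. p (\<lambda>i. x i - y i) \<le> \<delta>)"
proof -
  define P where "P N \<longleftrightarrow> finite N \<and> N \<subseteq> S \<and> separated \<delta> N" for N
  have bound: "real (card N) \<le> (1 + 2 / \<delta>) ^ card I" if "P N" for N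
    using that S card_separated_le[OF \<open>0 < \<delta>\<close>] unfolding P_def by blast
  have "P {}" unfolding P_def separated_def by simp
  moreover have "card N < nat \<lceil>(1 + 2 / \<delta>) ^ card I\<rceil> + 1" if "P N" for N
    using bound[OF that] by linarith
  ultimately obtain N where N: "P N" and N_max: "\<And>N'. P N' \<Longrightarrow> card N' \<le> card N"
    using ex_has_greatest_nat[of P "{}" card] by blast
  have "\<exists>y\<in>N. p (\<lambda>i. x i - y i) \<le> \<delta>" if "x \<in> S" for x
  proof (rule ccontr)
    assume "\<not> ?thesis"
    then have far: "\<And>y. y \<in> N \<Longrightarrow> \<delta> < p (\<lambda>i. x i - y i)" by (meson not_le)
    then have "x \<notin> N" using \<open>0 < \<delta>\<close> p_zero by force
    have "separated \<delta> (insert x N)"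
      unfolding separated_def
    proof (intro ballI impI)
      fix u v assume "u \<in> insert x N" "v \<in> insert x N" "u \<noteq> v"
      then consider "u = x" "v \<in> N" | "v = x" "u \<in> N" | "u \<in> N" "v \<in> N" by auto
      then show "\<delta> < p (\<lambda>i. u i - v i)"
        using far p_diff_commute[of x] N \<open>u \<noteq> v\<close> unfolding P_def separated_def by cases auto
    qed
    then have "P (insert x N)" using N that unfolding P_def by simp
    then have "card (insert x N) \<le> card N" by (rule N_max)
    then show False using \<open>x \<notin> N\<close> N unfolding P_def by simp
  qed
  then show ?thesis using N bound[OF N] unfolding P_def by blast
qed

end

section \<open>Tensors, the t-product and the tube-wise Fourier transform\<close>

definition tube_dft :: "nat \<Rightarrow> tensor3 \<Rightarrow> nat \<Rightarrow> nat \<Rightarrow> nat \<Rightarrow> complex" where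
  "tube_dft n3 X i j k = dft n3 (\<lambda>l. complex_of_real (X i j l)) k"

definition t_product :: "nat \<Rightarrow> nat \<Rightarrow> tensor3 \<Rightarrow> tensor3 \<Rightarrow> tensor3" where
  "t_product n3 r A B = (\<lambda>i j k. \<Sum>a<r. \<Sum>l<n3. A i a l * B a j ((k + (n3 - l)) mod n3))"

definition frob_sq :: "nat \<Rightarrow> nat \<Rightarrow> nat \<Rightarrow> tensor3 \<Rightarrow> real" where
  "frob_sq n1 n2 n3 X = (\<Sum>i<n1. \<Sum>j<n2. \<Sum>k<n3. (X i j k)\<^sup>2)"

definition index_box :: "nat \<Rightarrow> nat \<Rightarrow> nat \<Rightarrow> (nat \<times> nat \<times> nat) set" where
  "index_box n1 n2 n3 = {..<n1} \<times> {..<n2} \<times> {..<n3}"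

lemma sum_index_box: "(\<Sum>i<n1. \<Sum>j<n2. \<Sum>k<n3. f i j k) = (\<Sum>(i,j,k)\<in>index_box n1 n2 n3. f i j k)"
  unfolding index_box_def by (simp add: sum.cartesian_product)

lemma frob_norm_eq_sqrt: "frob_norm n1 n2 n3 X = sqrt (frob_sq n1 n2 n3 X)"
  unfolding frob_norm_def frob_sq_def ..

lemma frob_norm_eq_L2_set: "frob_norm n1 n2 n3 X = L2_set (\<lambda>(i,j,k). X i j k) (index_box n1 n2 n3)"
  unfolding frob_norm_def L2_set_def sum_index_box by (simp add: case_prod_beta)

lemma tube_dft_t_product:
  assumes n: "0 < n3"
  shows "tube_dft n3 (t_product n3 r A B) i j k = (\<Sum>a<r. tube_dft n3 A i a k * tube_dft n3 B a j k)"
proof -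
  have "tube_dft n3 (t_product n3 r A B) i j k
      = dft n3 (\<lambda>m. \<Sum>a<r. circ_conv n3 (\<lambda>l. complex_of_real (A i a l)) (\<lambda>l. complex_of_real (B a j l)) m) k"
    unfolding tube_dft_def t_product_def circ_conv_def by simp
  also have "\<dots> = (\<Sum>a<r. dft n3 (circ_conv n3 (\<lambda>l. complex_of_real (A i a l)) (\<lambda>l. complex_of_real (B a j l))) k)"
    by (rule dft_sum)
  also have "\<dots> = (\<Sum>a<r. tube_dft n3 A i a k * tube_dft n3 B a j k)"
    unfolding tube_dft_def by (simp add: dft_circ_conv[OF n])
  finally show ?thesis .
qed

lemma tube_dft_parseval:
  assumes n: "0 < n3"
  shows "(\<Sum>i<n1. \<Sum>j<n2. \<Sum>k<n3. (cmod (tube_dft n3 X i j k))\<^sup>2) = real n3 * frob_sq n1 n2 n3 X"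
proof -
  have "(\<Sum>k<n3. (cmod (tube_dft n3 X i j k))\<^sup>2) = real n3 * (\<Sum>k<n3. (X i j k)\<^sup>2)" for i j
    unfolding tube_dft_def dft_parseval[OF n] by simp
  then show ?thesis unfolding frob_sq_def sum_distrib_left by simp
qed

lemma tube_dft_neg_index:
  assumes "0 < n3" and "k < n3"
  shows "tube_dft n3 X i j ((n3 - k) mod n3) = cnj (tube_dft n3 X i j k)"
  unfolding tube_dft_def by (rule dft_of_real_neg_mod[OF assms])

definition tensor_of :: "(nat \<times> nat \<times> nat \<Rightarrow> real) \<Rightarrow> tensor3" where
  "tensor_of x = (\<lambda>i j k. x (i, j, k))"

lemma frob_cong:
  "(\<And>i j k. i < n1 \<Longrightarrow> j < n2 \<Longrightarrow> k < n3 \<Longrightarrow> A i j k = B i j k)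
   \<Longrightarrow> frob_norm n1 n2 n3 A = frob_norm n1 n2 n3 B"
  unfolding frob_norm_def by (intro arg_cong[where f=sqrt] sum.cong refl) auto

lemma frob_norm_triangle:
  "frob_norm n1 n2 n3 (\<lambda>i j k. A i j k + B i j k) \<le> frob_norm n1 n2 n3 A + frob_norm n1 n2 n3 B"
proof -
  have e: "(\<lambda>(i,j,k). A i j k + B i j k) = (\<lambda>q. (\<lambda>(i,j,k). A i j k) q + (\<lambda>(i,j,k). B i j k) q)" by auto
  show ?thesis unfolding frob_norm_eq_L2_set e by (rule L2_set_triangle_ineq)
qed

lemma frob_norm_scale: "frob_norm n1 n2 n3 (\<lambda>i j k. c * A i j k) = \<bar>c\<bar> * frob_norm n1 n2 n3 A"
proof -
  have "frob_sq n1 n2 n3 (\<lambda>i j k. c * A i j k) = c\<^sup>2 * frob_sq n1 n2 n3 A"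
    unfolding frob_sq_def by (simp add: sum_distrib_left power_mult_distrib)
  then show ?thesis unfolding frob_norm_eq_sqrt by (simp add: real_sqrt_mult)
qed

lemma frob_norm_nonneg: "0 \<le> frob_norm n1 n2 n3 A"
  unfolding frob_norm_eq_sqrt frob_sq_def by (simp add: sum_nonneg)

lemma frob_dist_triangle: "frob_dist n1 n2 n3 A C \<le> frob_dist n1 n2 n3 A B + frob_dist n1 n2 n3 B C"
  using frob_norm_triangle[of n1 n2 n3 "\<lambda>i j k. A i j k - B i j k" "\<lambda>i j k. B i j k - C i j k"]
  unfolding frob_dist_def by simp

lemma frob_dist_commute: "frob_dist n1 n2 n3 A B = frob_dist n1 n2 n3 B A"
  unfolding frob_dist_def frob_norm_def by (simp add: power2_commute)

lemma frob_sq_nonneg: "0 \<le> frob_sq n1 n2 n3 A" unfolding frob_sq_def by (simp add: sum_nonneg)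

lemma entry_sq_le_frob_sq: "i < n1 \<Longrightarrow> j < n2 \<Longrightarrow> k < n3 \<Longrightarrow> (A i j k)\<^sup>2 \<le> frob_sq n1 n2 n3 A"
proof -
  assume "i < n1" "j < n2" "k < n3"
  then have "(i,j,k) \<in> index_box n1 n2 n3" unfolding index_box_def by simp
  then have "(\<lambda>(i,j,k). (A i j k)\<^sup>2) (i,j,k) \<le> (\<Sum>(i,j,k)\<in>index_box n1 n2 n3. (A i j k)\<^sup>2)"
    by (intro member_le_sum) (auto simp: index_box_def)
  then show ?thesis unfolding frob_sq_def sum_index_box by simp
qed

lemma abs_entry_le_frob_norm: "i < n1 \<Longrightarrow> j < n2 \<Longrightarrow> k < n3 \<Longrightarrow> \<bar>A i j k\<bar> \<le> frob_norm n1 n2 n3 A"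
  unfolding frob_norm_eq_sqrt by (metis entry_sq_le_frob_sq real_sqrt_abs real_sqrt_le_mono)

lemma t_product_add_left:
  "t_product n3 r (tensor_of (\<lambda>q. x q + y q)) Z = (\<lambda>i j k. t_product n3 r (tensor_of x) Z i j k + t_product n3 r (tensor_of y) Z i j k)"
  unfolding t_product_def tensor_of_def by (simp add: distrib_right sum.distrib)

lemma t_product_scale_left:
  "t_product n3 r (tensor_of (\<lambda>q. c * x q)) Z = (\<lambda>i j k. c * t_product n3 r (tensor_of x) Z i j k)"
  unfolding t_product_def tensor_of_def by (simp add: sum_distrib_left mult.assoc)

lemma t_product_scale_right: "t_product n3 r A (\<lambda>a j m. c * Z a j m) = (\<lambda>i j k. c * t_product n3 r A Z i j k)"
  unfolding t_product_def by (simp add: sum_distrib_left mult_ac)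

lemma t_product_cong_right:
  assumes "0 < n3" "\<And>a j m. a < r \<Longrightarrow> j < n2 \<Longrightarrow> m < n3 \<Longrightarrow> Z a j m = Z' a j m" "j < n2"
  shows "t_product n3 r A Z i j k = t_product n3 r A Z' i j k"
  unfolding t_product_def using assms by (intro sum.cong refl) auto

lemma t_product_diff:
  "t_product n3 r A B i j k - t_product n3 r A' B' i j k
   = t_product n3 r (\<lambda>i a l. A i a l - A' i a l) B i j k + t_product n3 r A' (\<lambda>a j m. B a j m - B' a j m) i j k"
  unfolding t_product_def by (simp add: sum_subtractf[symmetric] sum.distrib[symmetric] algebra_simps)

lemma card_index_box: "card (index_box a b c) = a * b * c"
  unfolding index_box_def by (simp add: card_cartesian_product)

lemma tube_dft_eq_zero:
  assumes "0 < n3" and "\<And>i j k. i < n1 \<Longrightarrow> j < n2 \<Longrightarrow> k < n3 \<Longrightarrow> tube_dft n3 D i j k = 0"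
    and "i < n1" "j < n2" "k < n3"
  shows "D i j k = 0"
proof -
  have "real n3 * frob_sq n1 n2 n3 D = 0"
    unfolding tube_dft_parseval[OF assms(1), symmetric] by (simp add: assms(2))
  then have "frob_sq n1 n2 n3 D = 0" using assms(1) by simp
  then show ?thesis using entry_sq_le_frob_sq[OF assms(3-5), of D] by simp
qed

section \<open>Factorisation of tensors of low tubal rank\<close>

text \<open>In every Fourier slice \<open>k\<close>, Gram--Schmidt applied to the columns of the slice yields an
  orthonormal basis of its column space (the columns of \<open>U_hat\<close>) and the coordinates of
  the columns in that basis (\<open>W_hat\<close>). The basis has at most \<open>r\<close> vectors, and slices
  \<open>k\<close> and \<open>n3 - k\<close> are complex conjugate, so the inverse transforms \<open>U_factor\<close> and
  \<open>W_factor\<close> are real.\<close>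

locale tubal_factorization =
  fixes n1 n2 n3 r :: nat and X :: tensor3
  assumes n3_pos: "0 < n3" and rank_le: "tubal_rank n1 n2 n3 X \<le> r"
begin

definition dft_column :: "nat \<Rightarrow> nat \<Rightarrow> cvec" where
  "dft_column k j = (\<lambda>i. tube_dft n3 X i j k)"

definition gs_basis :: "nat \<Rightarrow> (cvec \<times> cvec) list" where
  "gs_basis k = gram_schmidt n1 (map (dft_column k) [0..<n2]) []"

definition U_hat :: "nat \<Rightarrow> nat \<Rightarrow> nat \<Rightarrow> complex" where
  "U_hat i a k = (if a < length (gs_basis k) then snd (gs_basis k ! a) i else 0)"

definition W_hat :: "nat \<Rightarrow> nat \<Rightarrow> nat \<Rightarrow> complex" where
  "W_hat a j k = (if a < length (gs_basis k) then cinner n1 (dft_column k j) (snd (gs_basis k ! a)) else 0)"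

definition U_factor :: "nat \<times> nat \<times> nat \<Rightarrow> real" where
  "U_factor = (\<lambda>(i, a, l). if i < n1 \<and> a < r \<and> l < n3 then Re (idft n3 (U_hat i a) l) else 0)"

definition W_factor :: "nat \<times> nat \<times> nat \<Rightarrow> real" where
  "W_factor = (\<lambda>(a, j, l). if a < r \<and> j < n2 \<and> l < n3 then Re (idft n3 (W_hat a j) l) else 0)"

lemma
  shows gs_basis_invariant: "gs_invariant n1 (gs_basis k)"
    and expands_in_gs_basis: "j < n2 \<Longrightarrow> expands_in n1 (gs_basis k) (dft_column k j)"
    and gs_basis_inputs: "set (map fst (gs_basis k)) \<subseteq> dft_column k ` {..<n2}"
  using gram_schmidt_invariant[OF gs_invariant_Nil, of "{}" n1 "map (dft_column k) [0..<n2]"]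
  unfolding gs_basis_def by auto

lemma gs_basis_orthonormal: "orthonormal n1 (gs_basis k)"
  using gs_basis_invariant unfolding gs_invariant_def by auto

lemma gs_basis_neg_index:
  assumes k: "k < n3"
  shows "gs_basis ((n3 - k) mod n3) = map (map_prod cconj_vec cconj_vec) (gs_basis k)"
proof -
  have eq: "map (dft_column ((n3 - k) mod n3)) [0..<n2] = map cconj_vec (map (dft_column k) [0..<n2])"
    unfolding dft_column_def cconj_vec_def using tube_dft_neg_index[OF n3_pos k] by simp
  show ?thesis
    using gram_schmidt_cconj_vec[of n1 "map (dft_column k) [0..<n2]" "[]"] unfolding gs_basis_def eq by simp
qed

lemma U_hat_neg_index: "k < n3 \<Longrightarrow> U_hat i a ((n3 - k) mod n3) = cnj (U_hat i a k)"
  unfolding U_hat_def by (simp add: gs_basis_neg_index cconj_vec_def)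

lemma W_hat_neg_index:
  assumes "k < n3" shows "W_hat a j ((n3 - k) mod n3) = cnj (W_hat a j k)"
proof -
  have "dft_column ((n3 - k) mod n3) j = cconj_vec (dft_column k j)"
    unfolding dft_column_def cconj_vec_def using tube_dft_neg_index[OF n3_pos assms] by simp
  then show ?thesis unfolding W_hat_def using assms by (simp add: gs_basis_neg_index cinner_cconj_vec)
qed

lemma length_gs_basis_le:
  assumes k: "k < n3"
  shows "length (gs_basis k) \<le> r"
proof -
  let ?A = "dft_slice n1 n2 n3 X k"
  let ?V = "(\<lambda>p. vec n1 (fst (gs_basis k ! p))) ` {..<length (gs_basis k)}"
  have card: "card ?V = length (gs_basis k)"
    using card_image[OF gs_invariant_inj[OF gs_basis_invariant]] by simp
  have Acar: "?A \<in> carrier_mat n1 n2" unfolding dft_slice_def by simp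
  have sub: "?V \<subseteq> set (cols ?A)"
  proof
    fix v assume "v \<in> ?V"
    then obtain p where p: "p < length (gs_basis k)" "v = vec n1 (fst (gs_basis k ! p))" by auto
    have "fst (gs_basis k ! p) \<in> set (map fst (gs_basis k))" using p(1) by (auto intro!: image_eqI nth_mem)
    then obtain j where j: "j < n2" "fst (gs_basis k ! p) = dft_column k j" using gs_basis_inputs by auto
    have "v = Matrix.col ?A j"
      unfolding p(2) j(2) dft_slice_def using j(1) by (intro eq_vecI) (simp_all add: dft_column_def tube_dft_def dft_def)
    then show "v \<in> set (cols ?A)" using j(1) Acar by (auto simp: cols_def)
  qed
  have "card ?V \<le> vec_space.rank n1 ?A"
    by (rule vec_space.rank_ge_card_indpt[OF Acar sub gs_invariant_lin_indpt[OF gs_basis_invariant]])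
  also have "\<dots> \<le> tubal_rank n1 n2 n3 X"
    unfolding tubal_rank_def using k by (intro Max_ge) auto
  finally show ?thesis using card rank_le by simp
qed

lemma tube_dft_U_factor:
  assumes "i < n1" "a < r" "k < n3"
  shows "tube_dft n3 (tensor_of U_factor) i a k = U_hat i a k"
proof -
  have "tube_dft n3 (tensor_of U_factor) i a k = dft n3 (\<lambda>l. complex_of_real (Re (idft n3 (U_hat i a) l))) k"
    unfolding tube_dft_def tensor_of_def U_factor_def using assms by (intro dft_cong) simp
  also have "\<dots> = U_hat i a k" using assms by (intro dft_Re_idft n3_pos U_hat_neg_index)
  finally show ?thesis .
qed

lemma tube_dft_W_factor:
  assumes "a < r" "j < n2" "k < n3"
  shows "tube_dft n3 (tensor_of W_factor) a j k = W_hat a j k"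
proof -
  have "tube_dft n3 (tensor_of W_factor) a j k = dft n3 (\<lambda>l. complex_of_real (Re (idft n3 (W_hat a j) l))) k"
    unfolding tube_dft_def tensor_of_def W_factor_def using assms by (intro dft_cong) simp
  also have "\<dots> = W_hat a j k" using assms by (intro dft_Re_idft n3_pos W_hat_neg_index)
  finally show ?thesis .
qed

lemma sum_U_hat:
  assumes "k < n3"
  shows "(\<Sum>a<r. U_hat i a k * z a) = (\<Sum>a<length (gs_basis k). z a * snd (gs_basis k ! a) i)"
proof -
  have "(\<Sum>a<r. U_hat i a k * z a) = (\<Sum>a<length (gs_basis k). U_hat i a k * z a)"
    using length_gs_basis_le[OF assms] by (intro sum.mono_neutral_right) (auto simp: U_hat_def)
  then show ?thesis unfolding U_hat_def by (simp add: mult.commute)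
qed

lemma U_hat_W_hat_expand:
  assumes "i < n1" and "j < n2" and "k < n3"
  shows "(\<Sum>a<r. U_hat i a k * W_hat a j k) = tube_dft n3 X i j k"
  using assms expands_in_gs_basis[of j k] unfolding sum_U_hat[OF assms(3)] expands_in_def
  by (simp add: W_hat_def dft_column_def)

lemma t_product_factors:
  assumes "i < n1" and "j < n2" and "k < n3"
  shows "t_product n3 r (tensor_of U_factor) (tensor_of W_factor) i j k = X i j k"
proof -
  let ?T = "t_product n3 r (tensor_of U_factor) (tensor_of W_factor)"
  have "tube_dft n3 (\<lambda>i j l. ?T i j l - X i j l) i j k = 0" if "i < n1" "j < n2" "k < n3" for i j k
  proof -
    have "tube_dft n3 ?T i j k = (\<Sum>a<r. U_hat i a k * W_hat a j k)"
      unfolding tube_dft_t_product[OF n3_pos] using that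
      by (intro sum.cong refl) (simp add: tube_dft_U_factor tube_dft_W_factor)
    then show ?thesis
      using U_hat_W_hat_expand[OF that] unfolding tube_dft_def by (simp add: dft_diff)
  qed
  from tube_dft_eq_zero[OF n3_pos this assms] show ?thesis by simp
qed

lemma frob_sq_W_factor: "frob_sq r n2 n3 (tensor_of W_factor) = frob_sq n1 n2 n3 X"
proof -
  have W_col: "(\<Sum>a<r. (cmod (W_hat a j k))\<^sup>2) = (\<Sum>i<n1. (cmod (tube_dft n3 X i j k))\<^sup>2)"
    if "j < n2" "k < n3" for j k
  proof -
    have "(\<Sum>a<r. (cmod (W_hat a j k))\<^sup>2) = (\<Sum>a<length (gs_basis k). (cmod (W_hat a j k))\<^sup>2)"
      using length_gs_basis_le[OF that(2)] by (intro sum.mono_neutral_right) (auto simp: W_hat_def)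
    also have "\<dots> = (\<Sum>i<n1. (cmod (dft_column k j i))\<^sup>2)"
      using expands_in_parseval[OF expands_in_gs_basis[OF that(1)]] by (simp add: W_hat_def)
    finally show ?thesis unfolding dft_column_def .
  qed
  have "real n3 * frob_sq r n2 n3 (tensor_of W_factor) = (\<Sum>a<r. \<Sum>j<n2. \<Sum>k<n3. (cmod (W_hat a j k))\<^sup>2)"
    unfolding tube_dft_parseval[OF n3_pos, symmetric] by (intro sum.cong refl) (simp add: tube_dft_W_factor)
  also have "\<dots> = (\<Sum>j<n2. \<Sum>k<n3. \<Sum>a<r. (cmod (W_hat a j k))\<^sup>2)"
    by (rule sum_rotate3)
  also have "\<dots> = (\<Sum>j<n2. \<Sum>k<n3. \<Sum>i<n1. (cmod (tube_dft n3 X i j k))\<^sup>2)"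
    by (rule sum.cong[OF refl], rule sum.cong[OF refl]) (simp add: W_col)
  also have "\<dots> = (\<Sum>i<n1. \<Sum>j<n2. \<Sum>k<n3. (cmod (tube_dft n3 X i j k))\<^sup>2)"
    by (rule sum_rotate3[symmetric])
  also have "\<dots> = real n3 * frob_sq n1 n2 n3 X"
    by (rule tube_dft_parseval[OF n3_pos])
  finally show ?thesis using n3_pos by simp
qed

text \<open>Slice by slice, multiplication by the orthonormal columns of \<open>U_hat\<close> does not increase
  the Euclidean norm; by Parseval the t-product with \<open>U_factor\<close> is therefore a contraction.\<close>

lemma frob_sq_t_product_U_factor_le:
  "frob_sq n1 n2 n3 (t_product n3 r (tensor_of U_factor) Z) \<le> frob_sq r n2 n3 Z"
proof -
  have col: "(\<Sum>i<n1. (cmod (\<Sum>a<r. U_hat i a k * tube_dft n3 Z a j k))\<^sup>2) \<le> (\<Sum>a<r. (cmod (tube_dft n3 Z a j k))\<^sup>2)"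
    if "k < n3" for j k
  proof -
    have "(\<Sum>i<n1. (cmod (\<Sum>a<r. U_hat i a k * tube_dft n3 Z a j k))\<^sup>2)
        = (\<Sum>a<length (gs_basis k). (cmod (tube_dft n3 Z a j k))\<^sup>2)"
      unfolding sum_U_hat[OF that] by (rule orthonormal_comb_norm[OF gs_basis_orthonormal])
    also have "\<dots> \<le> (\<Sum>a<r. (cmod (tube_dft n3 Z a j k))\<^sup>2)"
      using length_gs_basis_le[OF that] by (intro sum_mono2) auto
    finally show ?thesis .
  qed
  have "real n3 * frob_sq n1 n2 n3 (t_product n3 r (tensor_of U_factor) Z)
      = (\<Sum>i<n1. \<Sum>j<n2. \<Sum>k<n3. (cmod (\<Sum>a<r. U_hat i a k * tube_dft n3 Z a j k))\<^sup>2)"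
    unfolding tube_dft_parseval[OF n3_pos, symmetric] tube_dft_t_product[OF n3_pos]
    by (intro sum.cong refl) (simp add: tube_dft_U_factor)
  also have "\<dots> = (\<Sum>j<n2. \<Sum>k<n3. \<Sum>i<n1. (cmod (\<Sum>a<r. U_hat i a k * tube_dft n3 Z a j k))\<^sup>2)"
    by (rule sum_rotate3)
  also have "\<dots> \<le> (\<Sum>j<n2. \<Sum>k<n3. \<Sum>a<r. (cmod (tube_dft n3 Z a j k))\<^sup>2)"
    using col by (intro sum_mono) auto
  also have "\<dots> = (\<Sum>a<r. \<Sum>j<n2. \<Sum>k<n3. (cmod (tube_dft n3 Z a j k))\<^sup>2)"
    by (rule sum_rotate3[symmetric])
  also have "\<dots> = real n3 * frob_sq r n2 n3 Z"
    by (rule tube_dft_parseval[OF n3_pos])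
  finally show ?thesis using n3_pos by simp
qed

end

section \<open>The t-operator norm\<close>

definition frob_unit_ball :: "nat \<Rightarrow> nat \<Rightarrow> nat \<Rightarrow> tensor3 set" where
  "frob_unit_ball r n2 n3 = {Z. frob_sq r n2 n3 Z \<le> 1}"

definition t_op_norm :: "nat \<Rightarrow> nat \<Rightarrow> nat \<Rightarrow> nat \<Rightarrow> (nat \<times> nat \<times> nat \<Rightarrow> real) \<Rightarrow> real" where
  "t_op_norm n1 n2 n3 r x =
     Sup ((\<lambda>Z. frob_norm n1 n2 n3 (t_product n3 r (tensor_of x) Z)) ` frob_unit_ball r n2 n3)"

lemma frob_unit_ball_abs_le_1:
  assumes "Z \<in> frob_unit_ball r n2 n3" "a < r" "j < n2" "m < n3"
  shows "\<bar>Z a j m\<bar> \<le> 1"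
proof -
  have "(Z a j m)\<^sup>2 \<le> 1"
    using entry_sq_le_frob_sq[OF assms(2-4), of Z] assms(1) unfolding frob_unit_ball_def by simp
  then show ?thesis by (simp add: abs_square_le_1)
qed

lemma t_op_norm_bdd:
  assumes n3: "0 < n3"
  shows "bdd_above ((\<lambda>Z. frob_norm n1 n2 n3 (t_product n3 r (tensor_of x) Z)) ` frob_unit_ball r n2 n3)"
proof (rule bdd_aboveI2)
  fix Z assume Z: "Z \<in> frob_unit_ball r n2 n3"
  have "frob_norm n1 n2 n3 (t_product n3 r (tensor_of x) Z) \<le> (\<Sum>(i,j,k)\<in>index_box n1 n2 n3. \<bar>t_product n3 r (tensor_of x) Z i j k\<bar>)"
    unfolding frob_norm_eq_L2_set by (rule order_trans[OF L2_set_le_sum_abs]) (simp add: split_def)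
  also have "\<dots> \<le> (\<Sum>(i,j,k)\<in>index_box n1 n2 n3. \<Sum>a<r. \<Sum>l<n3. \<bar>x (i, a, l)\<bar>)"
  proof (rule sum_mono)
    fix q assume q: "q \<in> index_box n1 n2 n3"
    obtain i j k where ijk: "q = (i,j,k)" by (cases q) auto
    have j: "j < n2" using q ijk by (simp add: index_box_def)
    have "\<bar>t_product n3 r (tensor_of x) Z i j k\<bar> \<le> (\<Sum>a<r. \<Sum>l<n3. \<bar>x (i, a, l) * Z a j ((k + (n3 - l)) mod n3)\<bar>)"
      unfolding t_product_def tensor_of_def by (rule order_trans[OF sum_abs sum_mono]) (rule sum_abs)
    also have "\<dots> \<le> (\<Sum>a<r. \<Sum>l<n3. \<bar>x (i, a, l)\<bar>)"
    proof (intro sum_mono)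
      fix a l assume "a \<in> {..<r}" "l \<in> {..<n3}"
      then have "\<bar>Z a j ((k + (n3 - l)) mod n3)\<bar> \<le> 1" using frob_unit_ball_abs_le_1[OF Z _ j] n3 by simp
      then show "\<bar>x (i, a, l) * Z a j ((k + (n3 - l)) mod n3)\<bar> \<le> \<bar>x (i, a, l)\<bar>"
        by (simp add: abs_mult mult_left_le)
    qed
    finally show "(\<lambda>(i,j,k). \<bar>t_product n3 r (tensor_of x) Z i j k\<bar>) q \<le> (\<lambda>(i,j,k). \<Sum>a<r. \<Sum>l<n3. \<bar>x (i, a, l)\<bar>) q"
      using ijk by simp
  qed
  finally show "frob_norm n1 n2 n3 (t_product n3 r (tensor_of x) Z) \<le> (\<Sum>(i,j,k)\<in>index_box n1 n2 n3. \<Sum>a<r. \<Sum>l<n3. \<bar>x (i, a, l)\<bar>)" .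
qed

lemma zero_in_frob_unit_ball: "(\<lambda>a j m. 0) \<in> frob_unit_ball r n2 n3"
  unfolding frob_unit_ball_def frob_sq_def by simp

lemma t_op_norm_upper:
  "0 < n3 \<Longrightarrow> Z \<in> frob_unit_ball r n2 n3
   \<Longrightarrow> frob_norm n1 n2 n3 (t_product n3 r (tensor_of x) Z) \<le> t_op_norm n1 n2 n3 r x"
  unfolding t_op_norm_def by (rule cSUP_upper[OF _ t_op_norm_bdd])

lemma t_op_norm_least:
  "(\<And>Z. Z \<in> frob_unit_ball r n2 n3 \<Longrightarrow> frob_norm n1 n2 n3 (t_product n3 r (tensor_of x) Z) \<le> c)
   \<Longrightarrow> t_op_norm n1 n2 n3 r x \<le> c"
  unfolding t_op_norm_def using zero_in_frob_unit_ball[of r n2 n3] by (intro cSUP_least) auto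

lemma t_op_norm_nonneg: "0 < n3 \<Longrightarrow> 0 \<le> t_op_norm n1 n2 n3 r x"
  by (rule order_trans[OF frob_norm_nonneg t_op_norm_upper[OF _ zero_in_frob_unit_ball]])

lemma continuous_on_frob_t_product:
  "continuous_on UNIV (\<lambda>x. frob_norm n1 n2 n3 (t_product n3 r (tensor_of x) Z))"
  unfolding frob_norm_eq_sqrt frob_sq_def t_product_def tensor_of_def
  by (intro continuous_intros continuous_on_product_coordinates)

lemma continuous_on_frob_tensor_of: "continuous_on UNIV (\<lambda>x. frob_norm n1 n2 n3 (tensor_of x))"
  unfolding frob_norm_eq_sqrt frob_sq_def tensor_of_def
  by (intro continuous_intros continuous_on_product_coordinates)

lemma shift_mod_eq_0_iff: "l < n \<Longrightarrow> l0 < n \<Longrightarrow> ((l0 + (n - l)) mod n = 0) = (l = (l0::nat))"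
proof (cases "l \<le> l0")
  case True
  assume "l < n" "l0 < n"
  then have "l0 + (n - l) = (l0 - l) + n" using True by simp
  then have "(l0 + (n - l)) mod n = (l0 - l) mod n" by (simp only: mod_add_self2)
  then have "(l0 + (n - l)) mod n = l0 - l" using \<open>l0 < n\<close> by simp
  then show ?thesis using True by auto
qed simp


lemma t_product_unit_tube:
  assumes "a0 < r" "l0 < n3"
  shows "t_product n3 r A (\<lambda>a j m. if a = a0 \<and> j = 0 \<and> m = 0 then 1 else 0) i 0 l0 = A i a0 l0"
proof -
  have "t_product n3 r A (\<lambda>a j m. if a = a0 \<and> j = 0 \<and> m = 0 then 1 else 0) i 0 l0
      = (\<Sum>a<r. \<Sum>l<n3. if (a, l) = (a0, l0) then A i a0 l0 else 0)"
    unfolding t_product_def using assms(2) shift_mod_eq_0_iff[of _ n3 l0] by (intro sum.cong refl) auto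
  also have "\<dots> = (\<Sum>a<r. if a = a0 then A i a0 l0 else 0)"
    using assms(2) by (intro sum.cong refl) (simp add: sum.delta if_distrib)
  also have "\<dots> = A i a0 l0" using assms(1) by simp
  finally show ?thesis .
qed

lemma abs_le_t_op_norm:
  assumes "0 < n2" "0 < n3" and "q \<in> index_box n1 r n3"
  shows "\<bar>x q\<bar> \<le> t_op_norm n1 n2 n3 r x"
proof -
  obtain i0 a0 l0 where q: "q = (i0, a0, l0)" "i0 < n1" "a0 < r" "l0 < n3"
    using assms(3) unfolding index_box_def by auto
  define Z :: tensor3 where "Z = (\<lambda>a j m. if a = a0 \<and> j = 0 \<and> m = 0 then 1 else 0)"
  have "frob_sq r n2 n3 Z = (\<Sum>q\<in>index_box r n2 n3. if q = (a0, 0, 0) then 1 else 0)"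
    unfolding frob_sq_def sum_index_box Z_def by (intro sum.cong refl) (auto split: if_splits)
  also have "\<dots> = 1" using q assms(1,2) by (simp add: index_box_def)
  finally have "Z \<in> frob_unit_ball r n2 n3" unfolding frob_unit_ball_def by simp
  have "\<bar>x q\<bar> = \<bar>t_product n3 r (tensor_of x) Z i0 0 l0\<bar>"
    unfolding Z_def t_product_unit_tube[OF q(3,4)] q(1) tensor_of_def ..
  also have "\<dots> \<le> frob_norm n1 n2 n3 (t_product n3 r (tensor_of x) Z)"
    using q assms(1) by (intro abs_entry_le_frob_norm) auto
  also have "\<dots> \<le> t_op_norm n1 n2 n3 r x"
    by (rule t_op_norm_upper[OF assms(2) \<open>Z \<in> frob_unit_ball r n2 n3\<close>])
  finally show ?thesis .
qed

lemma t_op_norm_triangle: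
  assumes "0 < n3"
  shows "t_op_norm n1 n2 n3 r (\<lambda>i. x i + y i) \<le> t_op_norm n1 n2 n3 r x + t_op_norm n1 n2 n3 r y"
proof (rule t_op_norm_least)
  fix Z assume Z: "Z \<in> frob_unit_ball r n2 n3"
  have "frob_norm n1 n2 n3 (t_product n3 r (tensor_of (\<lambda>i. x i + y i)) Z)
      \<le> frob_norm n1 n2 n3 (t_product n3 r (tensor_of x) Z) + frob_norm n1 n2 n3 (t_product n3 r (tensor_of y) Z)"
    unfolding t_product_add_left by (rule frob_norm_triangle)
  also have "\<dots> \<le> t_op_norm n1 n2 n3 r x + t_op_norm n1 n2 n3 r y"
    by (intro add_mono t_op_norm_upper[OF assms Z])
  finally show "frob_norm n1 n2 n3 (t_product n3 r (tensor_of (\<lambda>i. x i + y i)) Z)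
      \<le> t_op_norm n1 n2 n3 r x + t_op_norm n1 n2 n3 r y" .
qed

lemma t_op_norm_scale_le:
  assumes "0 < n3"
  shows "t_op_norm n1 n2 n3 r (\<lambda>i. c * x i) \<le> \<bar>c\<bar> * t_op_norm n1 n2 n3 r x"
  by (rule t_op_norm_least)
    (use assms in \<open>simp add: t_product_scale_left frob_norm_scale mult_left_mono t_op_norm_upper\<close>)

lemma t_op_norm_scale:
  assumes "0 < n3"
  shows "t_op_norm n1 n2 n3 r (\<lambda>i. c * x i) = \<bar>c\<bar> * t_op_norm n1 n2 n3 r x"
proof (cases "c = 0")
  case True
  then show ?thesis
    using t_op_norm_scale_le[OF assms, of n1 n2 r 0 x] t_op_norm_nonneg[OF assms, of n1 n2 r "\<lambda>i. 0 * x i"] by simp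
next
  case False
  have "t_op_norm n1 n2 n3 r x = t_op_norm n1 n2 n3 r (\<lambda>i. (1 / c) * (c * x i))" using False by simp
  also have "\<dots> \<le> \<bar>1 / c\<bar> * t_op_norm n1 n2 n3 r (\<lambda>i. c * x i)" by (rule t_op_norm_scale_le[OF assms])
  finally have "\<bar>c\<bar> * t_op_norm n1 n2 n3 r x \<le> t_op_norm n1 n2 n3 r (\<lambda>i. c * x i)"
    using False by (simp add: field_simps abs_divide)
  then show ?thesis using t_op_norm_scale_le[OF assms, of n1 n2 r c x] by simp
qed

lemma closed_t_op_norm_le:
  assumes "0 < n3"
  shows "closed {x. t_op_norm n1 n2 n3 r x \<le> 1}"
proof -
  have "{x. t_op_norm n1 n2 n3 r x \<le> 1}
      = (\<Inter>Z\<in>frob_unit_ball r n2 n3. {x. frob_norm n1 n2 n3 (t_product n3 r (tensor_of x) Z) \<le> 1})"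
  proof (intro equalityI subsetI)
    fix x assume "x \<in> {x. t_op_norm n1 n2 n3 r x \<le> 1}"
    then show "x \<in> (\<Inter>Z\<in>frob_unit_ball r n2 n3. {x. frob_norm n1 n2 n3 (t_product n3 r (tensor_of x) Z) \<le> 1})"
      using t_op_norm_upper[OF assms, of _ r n2 n1 x] by force
  next
    fix x assume "x \<in> (\<Inter>Z\<in>frob_unit_ball r n2 n3. {x. frob_norm n1 n2 n3 (t_product n3 r (tensor_of x) Z) \<le> 1})"
    then show "x \<in> {x. t_op_norm n1 n2 n3 r x \<le> 1}" by (simp add: t_op_norm_least)
  qed
  also have "closed \<dots>"
    by (intro closed_INT ballI closed_Collect_le continuous_on_frob_t_product continuous_on_const)
  finally show ?thesis .
qed

lemma coord_norm_t_op_norm: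
  assumes "0 < n2" "0 < n3"
  shows "coord_norm (t_op_norm n1 n2 n3 r) (index_box n1 r n3) 1"
proof
  show "finite (index_box n1 r n3)" unfolding index_box_def by simp
  show "\<bar>x q\<bar> \<le> 1 * t_op_norm n1 n2 n3 r x" if "q \<in> index_box n1 r n3" for x q
    using abs_le_t_op_norm[OF assms that] by simp
qed (use assms in \<open>simp_all add: t_op_norm_triangle t_op_norm_scale closed_t_op_norm_le\<close>)

lemma frob_t_product_le:
  assumes n3: "0 < n3"
  shows "frob_norm n1 n2 n3 (t_product n3 r (tensor_of x) Z)
           \<le> t_op_norm n1 n2 n3 r x * frob_norm r n2 n3 Z"
proof (cases "frob_norm r n2 n3 Z = 0")
  case True
  then have f0: "frob_sq r n2 n3 Z = 0" unfolding frob_norm_eq_sqrt by simp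
  have "Z a j m = 0" if "a < r" "j < n2" "m < n3" for a j m
    using entry_sq_le_frob_sq[OF that, of Z] f0 by simp
  then have "frob_norm n1 n2 n3 (t_product n3 r (tensor_of x) Z)
      = frob_norm n1 n2 n3 (t_product n3 r (tensor_of x) (\<lambda>a j m. 0))"
    by (intro frob_cong t_product_cong_right[OF n3]) auto
  also have "\<dots> = 0" unfolding t_product_def frob_norm_def by simp
  finally show ?thesis using True by simp
next
  case False
  let ?s = "frob_norm r n2 n3 Z"
  have s0: "0 < ?s" using False frob_norm_nonneg[of r n2 n3 Z] by simp
  let ?Z = "\<lambda>a j m. (1 / ?s) * Z a j m"
  have "frob_sq r n2 n3 ?Z = frob_sq r n2 n3 Z / ?s\<^sup>2"
    unfolding frob_sq_def by (simp add: sum_divide_distrib power_divide)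
  also have "?s\<^sup>2 = frob_sq r n2 n3 Z" unfolding frob_norm_eq_sqrt using frob_sq_nonneg by simp
  finally have "frob_sq r n2 n3 ?Z \<le> 1" using s0 by simp
  then have "frob_norm n1 n2 n3 (t_product n3 r (tensor_of x) ?Z) \<le> t_op_norm n1 n2 n3 r x"
    by (intro t_op_norm_upper[OF n3]) (simp add: frob_unit_ball_def)
  then have "(1 / ?s) * frob_norm n1 n2 n3 (t_product n3 r (tensor_of x) Z) \<le> t_op_norm n1 n2 n3 r x"
    unfolding t_product_scale_right frob_norm_scale using s0 by simp
  then show ?thesis using s0 by (simp add: field_simps)
qed

definition frob_coord_norm :: "nat \<Rightarrow> nat \<Rightarrow> nat \<Rightarrow> (nat \<times> nat \<times> nat \<Rightarrow> real) \<Rightarrow> real" where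
  "frob_coord_norm r n2 n3 w = frob_norm r n2 n3 (tensor_of w)"

lemma coord_norm_frob_coord_norm: "coord_norm (frob_coord_norm r n2 n3) (index_box r n2 n3) 1"
proof
  show "finite (index_box r n2 n3)" unfolding index_box_def by simp
next
  fix x y :: "nat \<times> nat \<times> nat \<Rightarrow> real"
  show "frob_coord_norm r n2 n3 (\<lambda>i. x i + y i) \<le> frob_coord_norm r n2 n3 x + frob_coord_norm r n2 n3 y"
    unfolding frob_coord_norm_def tensor_of_def by (rule frob_norm_triangle)
next
  fix c :: real and x :: "nat \<times> nat \<times> nat \<Rightarrow> real"
  show "frob_coord_norm r n2 n3 (\<lambda>i. c * x i) = \<bar>c\<bar> * frob_coord_norm r n2 n3 x"
    unfolding frob_coord_norm_def tensor_of_def by (rule frob_norm_scale)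
next
  fix x :: "nat \<times> nat \<times> nat \<Rightarrow> real" and q assume q: "q \<in> index_box r n2 n3"
  obtain a j l where q': "q = (a, j, l)" "a < r" "j < n2" "l < n3" using q unfolding index_box_def by auto
  show "\<bar>x q\<bar> \<le> 1 * frob_coord_norm r n2 n3 x"
    using abs_entry_le_frob_norm[OF q'(2-4), of "tensor_of x"] q'(1)
    unfolding frob_coord_norm_def by (simp add: tensor_of_def)
next
  show "closed {x. frob_coord_norm r n2 n3 x \<le> 1}"
    unfolding frob_coord_norm_def
    by (intro closed_Collect_le continuous_on_frob_tensor_of continuous_on_const)
qed


section \<open>The covering number bound\<close>

lemma covering_number_le_card_approximants:
  fixes d :: "'a \<Rightarrow> 'a \<Rightarrow> real"
  assumes triangle: "\<And>x y z. d x z \<le> d x y + d y z" and commute: "\<And>x y. d x y = d y x"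
    and "finite A" and approx: "\<And>x. x \<in> S \<Longrightarrow> \<exists>a\<in>A. d x a \<le> \<epsilon> / 2"
  shows "covering_number d S \<epsilon> \<le> ereal (real (card A))"
proof -
  define near where "near a x \<longleftrightarrow> x \<in> S \<and> d x a \<le> \<epsilon> / 2" for a x
  define D where "D = {a \<in> A. \<exists>x. near a x}"
  define N where "N = (\<lambda>a. SOME x. near a x) ` D"
  have near_some: "near a (SOME x. near a x)" if "a \<in> D" for a
    using that unfolding D_def by (blast intro: someI)
  have "finite D" "D \<subseteq> A" using \<open>finite A\<close> unfolding D_def by auto
  have "eps_net d S \<epsilon> N"
    unfolding eps_net_def
  proof (intro conjI ballI)
    show "N \<subseteq> S" using near_some unfolding N_def near_def by auto
  next
    fix x assume "x \<in> S"
    then obtain a where a: "a \<in> A" "d x a \<le> \<epsilon> / 2" using approx by blast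
    then have "a \<in> D" using \<open>x \<in> S\<close> unfolding D_def near_def by auto
    have "d x (SOME x. near a x) \<le> d x a + d (SOME x. near a x) a"
      using triangle commute by metis
    also have "\<dots> \<le> \<epsilon>" using a near_some[OF \<open>a \<in> D\<close>] unfolding near_def by simp
    finally show "\<exists>y\<in>N. d x y \<le> \<epsilon>" using \<open>a \<in> D\<close> unfolding N_def by blast
  qed
  then have "covering_number d S \<epsilon> \<le> ereal (real (card N))"
    unfolding covering_number_def N_def using \<open>finite D\<close> by (intro INF_lower) simp
  also have "card N \<le> card A"
    unfolding N_def using le_trans[OF card_image_le[OF \<open>finite D\<close>] card_mono[OF \<open>finite A\<close> \<open>D \<subseteq> A\<close>]] .
  finally show ?thesis by simp
qed

lemma low_tubal_sphere_factorization:
  assumes "0 < n3" and "X \<in> low_tubal_sphere n1 n2 n3 r"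
  obtains U W where "U \<in> coord_unit_ball (t_op_norm n1 n2 n3 r) (index_box n1 r n3)"
    and "W \<in> coord_unit_ball (frob_coord_norm r n2 n3) (index_box r n2 n3)"
    and "frob_dist n1 n2 n3 X (t_product n3 r (tensor_of U) (tensor_of W)) = 0"
proof -
  have "tubal_rank n1 n2 n3 X \<le> r" and frob_X: "frob_norm n1 n2 n3 X = 1"
    using assms(2) unfolding low_tubal_sphere_def by auto
  with assms(1) interpret F: tubal_factorization n1 n2 n3 r X by unfold_locales
  have "t_op_norm n1 n2 n3 r F.U_factor \<le> 1"
  proof (rule t_op_norm_least)
    fix Z assume "Z \<in> frob_unit_ball r n2 n3"
    then show "frob_norm n1 n2 n3 (t_product n3 r (tensor_of F.U_factor) Z) \<le> 1"
      using F.frob_sq_t_product_U_factor_le[of Z] unfolding frob_unit_ball_def frob_norm_eq_sqrt by simp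
  qed
  then have "F.U_factor \<in> coord_unit_ball (t_op_norm n1 n2 n3 r) (index_box n1 r n3)"
    unfolding coord_unit_ball_def F.U_factor_def index_box_def by auto
  moreover have "frob_coord_norm r n2 n3 F.W_factor \<le> 1"
    using frob_X unfolding frob_coord_norm_def frob_norm_eq_sqrt F.frob_sq_W_factor by simp
  then have "F.W_factor \<in> coord_unit_ball (frob_coord_norm r n2 n3) (index_box r n2 n3)"
    unfolding coord_unit_ball_def by (auto simp: F.W_factor_def index_box_def)
  moreover have "frob_dist n1 n2 n3 X (t_product n3 r (tensor_of F.U_factor) (tensor_of F.W_factor)) = 0"
    unfolding frob_dist_def by (simp add: frob_cong[where B="\<lambda>i j k. 0"] F.t_product_factors frob_norm_def)
  ultimately show ?thesis by (rule that)
qed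

text \<open>Uses \<open>U * W - u * w = (U - u) * W + u * (W - w)\<close>.\<close>

lemma frob_dist_t_product_le:
  assumes "0 < n3"
    and "t_op_norm n1 n2 n3 r (\<lambda>q. U q - u q) \<le> \<delta>" and "t_op_norm n1 n2 n3 r u \<le> 1"
    and "frob_coord_norm r n2 n3 W \<le> 1" and "frob_coord_norm r n2 n3 (\<lambda>q. W q - w q) \<le> \<delta>"
  shows "frob_dist n1 n2 n3 (t_product n3 r (tensor_of U) (tensor_of W)) (t_product n3 r (tensor_of u) (tensor_of w))
           \<le> 2 * \<delta>"
proof -
  have "0 \<le> \<delta>" using order_trans[OF t_op_norm_nonneg assms(2)] assms(1) .
  let ?dU = "t_product n3 r (tensor_of (\<lambda>q. U q - u q)) (tensor_of W)"
  let ?dW = "t_product n3 r (tensor_of u) (tensor_of (\<lambda>q. W q - w q))"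
  have "frob_dist n1 n2 n3 (t_product n3 r (tensor_of U) (tensor_of W)) (t_product n3 r (tensor_of u) (tensor_of w))
      = frob_norm n1 n2 n3 (\<lambda>i j k. ?dU i j k + ?dW i j k)"
    unfolding frob_dist_def t_product_diff by (simp add: tensor_of_def)
  also have "\<dots> \<le> frob_norm n1 n2 n3 ?dU + frob_norm n1 n2 n3 ?dW"
    by (rule frob_norm_triangle)
  also have "\<dots> \<le> \<delta> * 1 + 1 * \<delta>"
  proof (intro add_mono order_trans[OF frob_t_product_le[OF assms(1)]] mult_mono)
    show "frob_norm r n2 n3 (tensor_of W) \<le> 1" "frob_norm r n2 n3 (tensor_of (\<lambda>q. W q - w q)) \<le> \<delta>"
      using assms(4,5) unfolding frob_coord_norm_def by auto
  qed (use assms \<open>0 \<le> \<delta>\<close> frob_norm_nonneg t_op_norm_nonneg in auto)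
  finally show ?thesis by simp
qed

lemma low_tubal_sphere_approximants:
  assumes "0 < n2" and "0 < n3" and "0 < \<delta>"
  obtains A where "finite A" and "real (card A) \<le> (1 + 2 / \<delta>) ^ (n1 * r * n3 + r * n2 * n3)"
    and "\<And>X. X \<in> low_tubal_sphere n1 n2 n3 r \<Longrightarrow> \<exists>T\<in>A. frob_dist n1 n2 n3 X T \<le> 2 * \<delta>"
proof -
  let ?BU = "coord_unit_ball (t_op_norm n1 n2 n3 r) (index_box n1 r n3)"
  let ?BW = "coord_unit_ball (frob_coord_norm r n2 n3) (index_box r n2 n3)"
  interpret U: coord_norm "t_op_norm n1 n2 n3 r" "index_box n1 r n3" 1
    using assms(1,2) by (rule coord_norm_t_op_norm)
  interpret W: coord_norm "frob_coord_norm r n2 n3" "index_box r n2 n3" 1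
    by (rule coord_norm_frob_coord_norm)
  obtain NU where NU: "finite NU" "NU \<subseteq> ?BU" "real (card NU) \<le> (1 + 2 / \<delta>) ^ (n1 * r * n3)"
    "\<And>x. x \<in> ?BU \<Longrightarrow> \<exists>y\<in>NU. t_op_norm n1 n2 n3 r (\<lambda>i. x i - y i) \<le> \<delta>"
    using U.exists_net[OF \<open>0 < \<delta>\<close> order_refl] by (auto simp: card_index_box)
  obtain NW where NW: "finite NW" "real (card NW) \<le> (1 + 2 / \<delta>) ^ (r * n2 * n3)"
    "\<And>x. x \<in> ?BW \<Longrightarrow> \<exists>y\<in>NW. frob_coord_norm r n2 n3 (\<lambda>i. x i - y i) \<le> \<delta>"
    using W.exists_net[OF \<open>0 < \<delta>\<close> order_refl] by (auto simp: card_index_box)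
  let ?T = "\<lambda>(u, w). t_product n3 r (tensor_of u) (tensor_of w)"
  have approx: "\<exists>T\<in>?T ` (NU \<times> NW). frob_dist n1 n2 n3 X T \<le> 2 * \<delta>"
    if X: "X \<in> low_tubal_sphere n1 n2 n3 r" for X
  proof -
    obtain U W where "U \<in> ?BU" "W \<in> ?BW"
      and "frob_dist n1 n2 n3 X (t_product n3 r (tensor_of U) (tensor_of W)) = 0"
      using low_tubal_sphere_factorization[OF \<open>0 < n3\<close> X] .
    then have X_UW: "frob_dist n1 n2 n3 X (?T (U, W)) = 0" by simp
    obtain u where u: "u \<in> NU" "t_op_norm n1 n2 n3 r (\<lambda>q. U q - u q) \<le> \<delta>"
      using NU(4)[OF \<open>U \<in> ?BU\<close>] by blast
    obtain w where w: "w \<in> NW" "frob_coord_norm r n2 n3 (\<lambda>q. W q - w q) \<le> \<delta>"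
      using NW(3)[OF \<open>W \<in> ?BW\<close>] by blast
    have "frob_dist n1 n2 n3 X (?T (u, w))
        \<le> frob_dist n1 n2 n3 X (?T (U, W)) + frob_dist n1 n2 n3 (?T (U, W)) (?T (u, w))"
      by (rule frob_dist_triangle)
    also have "\<dots> \<le> 2 * \<delta>"
      using X_UW u w \<open>W \<in> ?BW\<close> NU(2) frob_dist_t_product_le[OF \<open>0 < n3\<close>, of n1 n2 r U u \<delta> W w]
      unfolding coord_unit_ball_def by auto
    finally show ?thesis using u(1) w(1) by blast
  qed
  have "card (?T ` (NU \<times> NW)) \<le> card NU * card NW"
    using card_image_le[of "NU \<times> NW" ?T] NU(1) NW(1) by (simp add: card_cartesian_product)
  then have "real (card (?T ` (NU \<times> NW))) \<le> real (card NU) * real (card NW)"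
    by (simp flip: of_nat_mult)
  also have "\<dots> \<le> (1 + 2 / \<delta>) ^ (n1 * r * n3) * (1 + 2 / \<delta>) ^ (r * n2 * n3)"
    using NU(3) NW(2) by (simp add: mult_mono)
  finally have card: "real (card (?T ` (NU \<times> NW))) \<le> (1 + 2 / \<delta>) ^ (n1 * r * n3 + r * n2 * n3)"
    by (simp add: power_add)
  have "finite (?T ` (NU \<times> NW))" using NU(1) NW(1) by simp
  from that[OF this card approx] show ?thesis .
qed

theorem lemma2:
  fixes n1 n2 n3 r :: nat and \<epsilon> :: real
  assumes "0 < n1" and "0 < n2" and "0 < n3" and "0 < r"
    and "r \<le> min n1 n2"
    and "0 < \<epsilon>" and "\<epsilon> < 1"
  shows "covering_number (frob_dist n1 n2 n3) (low_tubal_sphere n1 n2 n3 r) \<epsilon>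
           \<le> ereal ((9 / \<epsilon>) ^ (r * r * n3 + n1 * r * n3 + n2 * r * n3))"
proof -
  have "0 < \<epsilon> / 4" using \<open>0 < \<epsilon>\<close> by simp
  obtain A where "finite A" and card_A: "real (card A) \<le> (1 + 2 / (\<epsilon> / 4)) ^ (n1 * r * n3 + r * n2 * n3)"
    and approx: "\<And>X. X \<in> low_tubal_sphere n1 n2 n3 r \<Longrightarrow> \<exists>T\<in>A. frob_dist n1 n2 n3 X T \<le> 2 * (\<epsilon> / 4)"
    using low_tubal_sphere_approximants[OF \<open>0 < n2\<close> \<open>0 < n3\<close> \<open>0 < \<epsilon> / 4\<close>, of n1 r] by blast
  have "covering_number (frob_dist n1 n2 n3) (low_tubal_sphere n1 n2 n3 r) \<epsilon> \<le> real (card A)"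
    using \<open>finite A\<close> approx
    by (intro covering_number_le_card_approximants[OF frob_dist_triangle frob_dist_commute]) simp_all
  also have "real (card A) \<le> (9 / \<epsilon>) ^ (n1 * r * n3 + r * n2 * n3)"
  proof (rule order_trans[OF card_A power_mono])
    show "1 + 2 / (\<epsilon> / 4) \<le> 9 / \<epsilon>" using \<open>0 < \<epsilon>\<close> \<open>\<epsilon> < 1\<close> by (simp add: field_simps)
  qed (use \<open>0 < \<epsilon>\<close> in simp)
  also have "\<dots> \<le> (9 / \<epsilon>) ^ (r * r * n3 + n1 * r * n3 + n2 * r * n3)"
    using \<open>0 < \<epsilon>\<close> \<open>\<epsilon> < 1\<close> by (intro power_increasing) simp_all
  finally show ?thesis by simp
qed

end
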